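(* Assume $\Lambda>0$ and let $(g,K,F,E,u,\Theta,\rho,e)$ be a $C^1$ solution of the evolution system (S) on an interval $[0,T)$, with $g$ positive definite, $\rho>0$, $e\ge0$, $\Theta^{00}\ge0$, satisfying the constraints (C1)–(C4) for all $t$, and with $H(0)<0$. Then for all $t\in[0,T)$: $\frac{dH}{dt}\ge K_{ij}K^{ij}-\Lambda\ge\frac13H^2-\Lambda\ge0$, and $$H(0)-\Lambda t\le H(t)<-\sqrt{3\Lambda}.$$
   Context: Setting. $G$ is a three-dimensional connected Lie group of Bianchi type I–VIII, $(e_i)_{i=1,2,3}$ a left-invariant frame with structure constants $C^k_{ij}$ defined by $[e_i,e_j]=C^k_{ij}e_k$ (so $C^k_{ij}=-C^k_{ji}$ and the Jacobi identity holds). $\Lambda\in\mathbb{R}$ is a constant. Latin indices run over $1,2,3$; repeated indices are summed. Unknowns (functions of $t$): a symmetric positive definite matrix $g=(g_{ij})$ with inverse $(g^{ij})$; a symmetric matrix $K=(K_{ij})$; an antisymmetric matrix $F=(F_{ij})$; vectors $E=(E^i)$, $u=(u^i)$; $\Theta=(\Theta^{00},\Theta^{0i})$; a function $\rho>0$; a function $e\ge0$. Derived quantities: $u^0=\sqrt{1+g_{ij}u^iu^j}$, $u_i=g_{ij}u^j$; $H=g^{ij}K_{ij}$; $K^i_j=g^{ik}K_{kj}$, $K^{ij}=g^{ik}g^{jl}K_{kl}$; $F^{ij}=g^{ik}g^{jl}F_{kl}$; $\gamma^l_{ij}=\tfrac12 g^{lk}(-C^m_{jk}g_{im}+C^m_{ki}g_{jm}+C^m_{ij}g_{km})$;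 $R_{ij}=\gamma^l_{lm}\gamma^m_{ji}-\gamma^m_{jl}\gamma^l_{mi}-C^l_{mj}\gamma^m_{li}$, $R=g^{ij}R_{ij}$; $\tau_{00}=\tfrac12 g_{ij}E^iE^j+\tfrac14 g^{ik}g^{jl}F_{kl}F_{ij}$, $\tau_{0j}=-E^kF_{jk}$, $\tau_{ij}=(\tfrac12 g_{ij}g_{kl}-g_{ik}g_{jl})E^kE^l-\tfrac14 g_{ij}g^{km}g^{nl}F_{kl}F_{mn}+g^{kl}F_{ik}F_{jl}$; $\Theta_{00}=\Theta^{00}$, $\Theta_{0j}=-g_{jk}\Theta^{0k}$; $T_{00}=\tfrac43\rho(u^0)^2+\Theta_{00}$, $T_{0j}=-\tfrac43\rho u^0u_j+\Theta_{0j}$, $T_{ij}=\tfrac43\rho u_iu_j+\tfrac13\rho g_{ij}$; $\nabla$ is the Levi-Civita connection of the left-invariant metric $g$, so for left-invariant tensors $\nabla_kK_{ij}=-\gamma^l_{ki}K_{lj}-\gamma^l_{kj}K_{il}$ and $\nabla^iK_{ij}=g^{ik}\nabla_kK_{ij}$. Evolution system (S) (dot $=d/dt$): $\dot g_{ij}=-2K_{ij}$; $\dot K_{ij}=R_{ij}+HK_{ij}-2K^l_jK_{il}-8\pi(\tau_{ij}+T_{ij})+4\pi(-T_{00}+g^{lm}T_{lm})g_{ij}-\Lambda g_{ij}$; $\dot F_{ij}=C^k_{ij}g_{kl}E^l$; $\dot E^i=HE^i-C^j_{jk}E^k\frac{u^i}{u^0}-C^j_{jk}g^{kl}g^{im}F_{lm}-\tfrac12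 C^i_{jk}g^{jl}g^{km}F_{lm}$; $\dot u^i=2K^i_ju^j-\gamma^i_{jk}\frac{u^ju^k}{u^0}+\frac{3}{4\rho u^0}C^j_{jk}E^kE^i-\frac{3}{4\rho(u^0)^2}C^j_{jk}E^kg^{il}F_{ml}u^m$; $\dot\Theta^{00}=H\Theta^{00}-C^i_{ij}\Theta^{0j}+\tfrac13\rho H+\rho u^0$; $\dot\Theta^{0i}=H\Theta^{0i}+2K^i_j\Theta^{0j}-\tfrac{\rho}{3}(C^k_{kj}g^{ij}+\gamma^i_{jk}g^{jk})+\rho u^i$; $\dot\rho=-\big(\frac{3}{4u^0}+K_{ij}\frac{u^iu^j}{(u^0)^2}-H+C^i_{ij}\frac{u^j}{u^0}\big)\rho-\tfrac34 g_{il}C^j_{jk}E^kE^l\frac{u^i}{(u^0)^3}$; $\dot e=-\big(K_{ij}\frac{u^iu^j}{(u^0)^2}+C^i_{ik}\frac{u^k}{u^0}-H\big)e+\tfrac34 g_{ij}\frac{u^iE^j}{(u^0)^2}\frac{e^2}{\rho}$. Constraints: (C1) $R-K_{ij}K^{ij}+H^2=16\pi(\tau_{00}+T_{00})+2\Lambda$; (C2) $\nabla^iK_{ij}=-8\pi(\tau_{0j}+T_{0j})$; (C3) $C^l_{ij}F_{kl}+C^l_{jk}F_{il}+C^l_{ki}F_{jl}=0$; (C4) $C^i_{ik}E^k+eu^0=0$. For Bianchi types I–VIII the scalar curvature satisfies $R\le0$. *)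

theory Defs
  imports "HOL-Analysis.Analysis"
begin

text \<open>Indices 1,2,3 are represented by the three elements of the numeral type 3.
  Matrices are real^3^3 (entry (i,j) is A $ i $ j), vectors real^3.
  Structure constants: C k i j stands for C^k_{ij}, i.e. [e_i,e_j] = C^k_{ij} e_k.\<close>

type_synonym mat3 = "real^3^3"
type_synonym vec3 = "real^3"
type_synonym sconst = "3 \<Rightarrow> 3 \<Rightarrow> 3 \<Rightarrow> real"

abbreviation S :: "(3 \<Rightarrow> real) \<Rightarrow> real" where
  "S f \<equiv> sum f UNIV"

definition antisym_sc :: "sconst \<Rightarrow> bool" where
  "antisym_sc C \<longleftrightarrow> (\<forall>k i j. C k i j = - C k j i)"

definition jacobi_sc :: "sconst \<Rightarrow> bool" where
  "jacobi_sc C \<longleftrightarrow> (\<forall>i j k m.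
     S (\<lambda>l. C l i j * C m l k + C l j k * C m l i + C l k i * C m l j) = 0)"

text \<open>Levi-Civita symbol; the structure constants of so(3) = su(2) are [f_a,f_b] = eps a b c f_c.\<close>
definition eps :: "3 \<Rightarrow> 3 \<Rightarrow> 3 \<Rightarrow> real" where
  "eps a b c =
     (if (a,b,c) \<in> {(0,1,2),(1,2,0),(2,0,1)} then 1
      else if (a,b,c) \<in> {(0,2,1),(2,1,0),(1,0,2)} then -1 else 0)"

text \<open>Bianchi type IX: the Lie algebra is isomorphic to so(3), i.e. there is a basis
  f_a = P_a^i e_i (P invertible) with [f_a,f_b] = eps_{abc} f_c.\<close>
definition bianchi_IX :: "sconst \<Rightarrow> bool" where
  "bianchi_IX C \<longleftrightarrow> (\<exists>P :: mat3. invertible P \<and>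
     (\<forall>a b k. S (\<lambda>i. S (\<lambda>j. P $ a $ i * P $ b $ j * C k i j))
              = S (\<lambda>c. eps a b c * P $ c $ k)))"

definition bianchi_I_to_VIII :: "sconst \<Rightarrow> bool" where
  "bianchi_I_to_VIII C \<longleftrightarrow> antisym_sc C \<and> jacobi_sc C \<and> \<not> bianchi_IX C"

definition u0 :: "mat3 \<Rightarrow> vec3 \<Rightarrow> real" where
  "u0 g u = sqrt (1 + S (\<lambda>i. S (\<lambda>j. g$i$j * u$i * u$j)))"

definition ulow :: "mat3 \<Rightarrow> vec3 \<Rightarrow> 3 \<Rightarrow> real" where
  "ulow g u i = S (\<lambda>j. g$i$j * u$j)"

definition Hm :: "mat3 \<Rightarrow> mat3 \<Rightarrow> real" where
  "Hm g K = S (\<lambda>i. S (\<lambda>j. matrix_inv g $i$j * K$i$j))"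

definition Kmix :: "mat3 \<Rightarrow> mat3 \<Rightarrow> 3 \<Rightarrow> 3 \<Rightarrow> real" where
  "Kmix g K i j = S (\<lambda>k. matrix_inv g $i$k * K$k$j)"

definition Kup :: "mat3 \<Rightarrow> mat3 \<Rightarrow> 3 \<Rightarrow> 3 \<Rightarrow> real" where
  "Kup g K i j = S (\<lambda>k. S (\<lambda>l. matrix_inv g $i$k * matrix_inv g $j$l * K$k$l))"

definition KK :: "mat3 \<Rightarrow> mat3 \<Rightarrow> real" where
  "KK g K = S (\<lambda>i. S (\<lambda>j. K$i$j * Kup g K i j))"

definition gam :: "sconst \<Rightarrow> mat3 \<Rightarrow> 3 \<Rightarrow> 3 \<Rightarrow> 3 \<Rightarrow> real" where
  "gam C g l i j = 1/2 * S (\<lambda>k. matrix_inv g $l$k *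
      (- S (\<lambda>m. C m j k * g$i$m) + S (\<lambda>m. C m k i * g$j$m) + S (\<lambda>m. C m i j * g$k$m)))"

definition Ric :: "sconst \<Rightarrow> mat3 \<Rightarrow> 3 \<Rightarrow> 3 \<Rightarrow> real" where
  "Ric C g i j = S (\<lambda>l. S (\<lambda>m.
      gam C g l l m * gam C g m j i - gam C g m j l * gam C g l m i - C l m j * gam C g m l i))"

definition Rscal :: "sconst \<Rightarrow> mat3 \<Rightarrow> real" where
  "Rscal C g = S (\<lambda>i. S (\<lambda>j. matrix_inv g $i$j * Ric C g i j))"

definition tau00 :: "mat3 \<Rightarrow> vec3 \<Rightarrow> mat3 \<Rightarrow> real" where
  "tau00 g E F = 1/2 * S (\<lambda>i. S (\<lambda>j. g$i$j * E$i * E$j))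
     + 1/4 * S (\<lambda>i. S (\<lambda>j. S (\<lambda>k. S (\<lambda>l.
          matrix_inv g $i$k * matrix_inv g $j$l * F$k$l * F$i$j))))"

definition tau0 :: "vec3 \<Rightarrow> mat3 \<Rightarrow> 3 \<Rightarrow> real" where
  "tau0 E F j = - S (\<lambda>k. E$k * F$j$k)"

definition tau :: "mat3 \<Rightarrow> vec3 \<Rightarrow> mat3 \<Rightarrow> 3 \<Rightarrow> 3 \<Rightarrow> real" where
  "tau g E F i j =
     S (\<lambda>k. S (\<lambda>l. (1/2 * g$i$j * g$k$l - g$i$k * g$j$l) * E$k * E$l))
     - 1/4 * g$i$j * S (\<lambda>k. S (\<lambda>l. S (\<lambda>m. S (\<lambda>n.
          matrix_inv g $k$m * matrix_inv g $n$l * F$k$l * F$m$n))))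
     + S (\<lambda>k. S (\<lambda>l. matrix_inv g $k$l * F$i$k * F$j$l))"

definition Th0low :: "mat3 \<Rightarrow> vec3 \<Rightarrow> 3 \<Rightarrow> real" where
  "Th0low g Th0 j = - S (\<lambda>k. g$j$k * Th0$k)"

definition T00 :: "mat3 \<Rightarrow> vec3 \<Rightarrow> real \<Rightarrow> real \<Rightarrow> real" where
  "T00 g u rho Th00 = 4/3 * rho * (u0 g u)^2 + Th00"

definition T0 :: "mat3 \<Rightarrow> vec3 \<Rightarrow> real \<Rightarrow> vec3 \<Rightarrow> 3 \<Rightarrow> real" where
  "T0 g u rho Th0 j = - 4/3 * rho * u0 g u * ulow g u j + Th0low g Th0 j"

definition Tm :: "mat3 \<Rightarrow> vec3 \<Rightarrow> real \<Rightarrow> 3 \<Rightarrow> 3 \<Rightarrow> real" where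
  "Tm g u rho i j = 4/3 * rho * ulow g u i * ulow g u j + 1/3 * rho * g$i$j"

text \<open>nabla_k K_{ij} and nabla^i K_{ij} for left-invariant tensors\<close>
definition nablaK :: "sconst \<Rightarrow> mat3 \<Rightarrow> mat3 \<Rightarrow> 3 \<Rightarrow> 3 \<Rightarrow> 3 \<Rightarrow> real" where
  "nablaK C g K k i j = - S (\<lambda>l. gam C g l k i * K$l$j) - S (\<lambda>l. gam C g l k j * K$i$l)"

definition divK :: "sconst \<Rightarrow> mat3 \<Rightarrow> mat3 \<Rightarrow> 3 \<Rightarrow> real" where
  "divK C g K j = S (\<lambda>i. S (\<lambda>k. matrix_inv g $i$k * nablaK C g K k i j))"

definition Kdot :: "sconst \<Rightarrow> real \<Rightarrow> mat3 \<Rightarrow> mat3 \<Rightarrow> mat3 \<Rightarrow> vec3 \<Rightarrow> vec3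
                    \<Rightarrow> real \<Rightarrow> vec3 \<Rightarrow> real \<Rightarrow> mat3" where
  "Kdot C Lam g K F E u Th00 Th0 rho = (\<chi> i j.
     Ric C g i j + Hm g K * K$i$j - 2 * S (\<lambda>l. Kmix g K l j * K$i$l)
     - 8 * pi * (tau g E F i j + Tm g u rho i j)
     + 4 * pi * (- T00 g u rho Th00
                 + S (\<lambda>l. S (\<lambda>m. matrix_inv g $l$m * Tm g u rho l m))) * g$i$j
     - Lam * g$i$j)"

definition Fdot :: "sconst \<Rightarrow> mat3 \<Rightarrow> vec3 \<Rightarrow> mat3" where
  "Fdot C g E = (\<chi> i j. S (\<lambda>k. S (\<lambda>l. C k i j * g$k$l * E$l)))"

definition Edot :: "sconst \<Rightarrow> mat3 \<Rightarrow> mat3 \<Rightarrow> mat3 \<Rightarrow> vec3 \<Rightarrow> vec3 \<Rightarrow> vec3" where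
  "Edot C g K F E u = (\<chi> i.
     Hm g K * E$i
     - S (\<lambda>j. S (\<lambda>k. C j j k * E$k)) * u$i / u0 g u
     - S (\<lambda>j. S (\<lambda>k. S (\<lambda>l. S (\<lambda>m. C j j k * matrix_inv g $k$l * matrix_inv g $i$m * F$l$m))))
     - 1/2 * S (\<lambda>j. S (\<lambda>k. S (\<lambda>l. S (\<lambda>m. C i j k * matrix_inv g $j$l * matrix_inv g $k$m * F$l$m)))))"

definition udot :: "sconst \<Rightarrow> mat3 \<Rightarrow> mat3 \<Rightarrow> mat3 \<Rightarrow> vec3 \<Rightarrow> vec3 \<Rightarrow> real \<Rightarrow> vec3" where
  "udot C g K F E u rho = (\<chi> i.
     2 * S (\<lambda>j. Kmix g K i j * u$j)
     - S (\<lambda>j. S (\<lambda>k. gam C g i j k * u$j * u$k)) / u0 g u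
     + 3 / (4 * rho * u0 g u) * S (\<lambda>j. S (\<lambda>k. C j j k * E$k)) * E$i
     - 3 / (4 * rho * (u0 g u)^2) * S (\<lambda>j. S (\<lambda>k. C j j k * E$k))
         * S (\<lambda>l. S (\<lambda>m. matrix_inv g $i$l * F$m$l * u$m)))"

definition Th00dot :: "sconst \<Rightarrow> mat3 \<Rightarrow> mat3 \<Rightarrow> vec3 \<Rightarrow> real \<Rightarrow> vec3 \<Rightarrow> real \<Rightarrow> real" where
  "Th00dot C g K u Th00 Th0 rho =
     Hm g K * Th00 - S (\<lambda>i. S (\<lambda>j. C i i j * Th0$j)) + 1/3 * rho * Hm g K + rho * u0 g u"

definition Th0dot :: "sconst \<Rightarrow> mat3 \<Rightarrow> mat3 \<Rightarrow> vec3 \<Rightarrow> vec3 \<Rightarrow> real \<Rightarrow> vec3" where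
  "Th0dot C g K u Th0 rho = (\<chi> i.
     Hm g K * Th0$i + 2 * S (\<lambda>j. Kmix g K i j * Th0$j)
     - rho / 3 * (S (\<lambda>k. S (\<lambda>j. C k k j * matrix_inv g $i$j))
                  + S (\<lambda>j. S (\<lambda>k. gam C g i j k * matrix_inv g $j$k)))
     + rho * u$i)"

definition rhodot :: "sconst \<Rightarrow> mat3 \<Rightarrow> mat3 \<Rightarrow> vec3 \<Rightarrow> vec3 \<Rightarrow> real \<Rightarrow> real" where
  "rhodot C g K E u rho =
     - (3 / (4 * u0 g u) + S (\<lambda>i. S (\<lambda>j. K$i$j * u$i * u$j)) / (u0 g u)^2 - Hm g K
        + S (\<lambda>i. S (\<lambda>j. C i i j * u$j)) / u0 g u) * rho
     - 3/4 * S (\<lambda>i. S (\<lambda>l. S (\<lambda>j. S (\<lambda>k. g$i$l * C j j k * E$k * E$l * u$i)))) / (u0 g u)^3"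

definition edot :: "sconst \<Rightarrow> mat3 \<Rightarrow> mat3 \<Rightarrow> vec3 \<Rightarrow> vec3 \<Rightarrow> real \<Rightarrow> real \<Rightarrow> real" where
  "edot C g K E u rho e =
     - (S (\<lambda>i. S (\<lambda>j. K$i$j * u$i * u$j)) / (u0 g u)^2
        + S (\<lambda>i. S (\<lambda>k. C i i k * u$k)) / u0 g u - Hm g K) * e
     + 3/4 * S (\<lambda>i. S (\<lambda>j. g$i$j * u$i * E$j)) / (u0 g u)^2 * e^2 / rho"

definition C1 :: "sconst \<Rightarrow> real \<Rightarrow> mat3 \<Rightarrow> mat3 \<Rightarrow> mat3 \<Rightarrow> vec3 \<Rightarrow> vec3 \<Rightarrow> real \<Rightarrow> real \<Rightarrow> bool" where
  "C1 C Lam g K F E u Th00 rho \<longleftrightarrow>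
     Rscal C g - KK g K + (Hm g K)^2 = 16 * pi * (tau00 g E F + T00 g u rho Th00) + 2 * Lam"

definition C2 :: "sconst \<Rightarrow> mat3 \<Rightarrow> mat3 \<Rightarrow> mat3 \<Rightarrow> vec3 \<Rightarrow> vec3 \<Rightarrow> vec3 \<Rightarrow> real \<Rightarrow> bool" where
  "C2 C g K F E u Th0 rho \<longleftrightarrow>
     (\<forall>j. divK C g K j = - 8 * pi * (tau0 E F j + T0 g u rho Th0 j))"

definition C3 :: "sconst \<Rightarrow> mat3 \<Rightarrow> bool" where
  "C3 C F \<longleftrightarrow> (\<forall>i j k.
     S (\<lambda>l. C l i j * F$k$l + C l j k * F$i$l + C l k i * F$j$l) = 0)"

definition C4 :: "sconst \<Rightarrow> mat3 \<Rightarrow> vec3 \<Rightarrow> vec3 \<Rightarrow> real \<Rightarrow> bool" where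
  "C4 C g E u e \<longleftrightarrow> S (\<lambda>i. S (\<lambda>k. C i i k * E$k)) + e * u0 g u = 0"

definition symm3 :: "mat3 \<Rightarrow> bool" where
  "symm3 A \<longleftrightarrow> (\<forall>i j. A$i$j = A$j$i)"

definition antisymm3 :: "mat3 \<Rightarrow> bool" where
  "antisymm3 A \<longleftrightarrow> (\<forall>i j. A$i$j = - A$j$i)"

definition posdef3 :: "mat3 \<Rightarrow> bool" where
  "posdef3 A \<longleftrightarrow> symm3 A \<and> (\<forall>x::vec3. x \<noteq> 0 \<longrightarrow> x \<bullet> (A *v x) > 0)"

end

theory Submission
  imports Defs
begin

text \<open>Choose a frame that is orthonormal for \<open>g\<close>. In it the structure constants decompose as
  \<open>C\<^sup>k\<^sub>i\<^sub>j = \<epsilon>\<^sub>i\<^sub>j\<^sub>l n\<^sup>l\<^sup>k + a\<^sub>i \<delta>\<^sup>k\<^sub>j - a\<^sub>j \<delta>\<^sup>k\<^sub>i\<close> with \<open>n\<close> symmetric,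
  the Jacobi identity becomes \<open>n a = 0\<close>, and the scalar curvature is
  \<open>R = -(tr n\<^sup>2 - (tr n)\<^sup>2/2) - 6|a|\<^sup>2\<close>. So \<open>R > 0\<close> forces \<open>tr n\<^sup>2 < (tr n)\<^sup>2/2\<close>, which makes
  \<open>n\<close> definite, hence \<open>a = 0\<close> and the Lie algebra is \<open>so(3)\<close>, of type IX. Thus \<open>R \<le> 0\<close> for
  types I--VIII.

  Tracing the evolution equation for \<open>K\<close> and using the Hamiltonian constraint (C1) to eliminate
  \<open>R\<close> gives \<open>dH/dt \<ge> K\<^sub>i\<^sub>jK\<^sup>i\<^sup>j - \<Lambda>\<close>, because all matter terms have the right sign, and
  \<open>K\<^sub>i\<^sub>jK\<^sup>i\<^sup>j \<ge> H\<^sup>2/3\<close> by Cauchy--Schwarz. The same constraint together with \<open>R \<le> 0\<close> gives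
  \<open>H\<^sup>2 > 3\<Lambda>\<close> at every time. Hence \<open>H\<close> never vanishes, so it stays negative by continuity,
  i.e. \<open>H < -\<surd>(3\<Lambda>)\<close>, and it is nondecreasing.\<close>

lemma vec3_eq_iff: "(x::real^3) = y \<longleftrightarrow> x$1 = y$1 \<and> x$2 = y$2 \<and> x$3 = y$3"
  by (simp add: vec_eq_iff forall_3)

lemma mat3_eq_iff: "(A::mat3) = B \<longleftrightarrow> (\<forall>i j. A$i$j = B$i$j)"
  by (simp add: vec_eq_iff)

lemma mat1_entry: "(mat 1 :: mat3) $ i $ j = (if i = j then 1 else 0)"
  by (simp add: mat_def)

lemma sum_mat1: "S (\<lambda>k. (mat 1 :: mat3) $ l $ k * f k) = f l"
  using exhaust_3[of l] by (auto simp: mat1_entry sum_3)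

lemma matrix_mul_scaleR_right: "(A::real^'n^'m) ** (c *\<^sub>R B) = c *\<^sub>R (A ** (B::real^'k^'n))"
  by (simp add: vec_eq_iff matrix_matrix_mult_def sum_distrib_left mult_ac)

lemma matrix_mul_scaleR_left: "(c *\<^sub>R (A::real^'n^'m)) ** B = c *\<^sub>R (A ** (B::real^'k^'n))"
  by (simp add: vec_eq_iff matrix_matrix_mult_def sum_distrib_left mult_ac)

lemma matrix_inv_unique:
  fixes A B :: "real^'n^'n"
  assumes "A ** B = mat 1" "B ** A = mat 1"
  shows "matrix_inv A = B"
proof -
  have "invertible A" using assms invertible_def by blast
  then have X: "A ** matrix_inv A = mat 1 \<and> matrix_inv A ** A = mat 1"
    unfolding matrix_inv_def invertible_def by (rule someI_ex)
  have "matrix_inv A = matrix_inv A ** (A ** B)" using assms by simp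
  also have "\<dots> = (matrix_inv A ** A) ** B" by (simp add: matrix_mul_assoc)
  also have "\<dots> = B" using X by simp
  finally show ?thesis .
qed

lemma matrix_inv_mat1: "matrix_inv (mat 1 :: mat3) = mat 1"
  by (rule matrix_inv_unique) simp_all

definition adj3 :: "mat3 \<Rightarrow> mat3" where
  "adj3 A = vector [
     vector [A$2$2*A$3$3 - A$2$3*A$3$2, A$1$3*A$3$2 - A$1$2*A$3$3, A$1$2*A$2$3 - A$1$3*A$2$2],
     vector [A$2$3*A$3$1 - A$2$1*A$3$3, A$1$1*A$3$3 - A$1$3*A$3$1, A$1$3*A$2$1 - A$1$1*A$2$3],
     vector [A$2$1*A$3$2 - A$2$2*A$3$1, A$1$2*A$3$1 - A$1$1*A$3$2, A$1$1*A$2$2 - A$1$2*A$2$1]]"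

lemma matrix_mul_adj3: "A ** adj3 A = det A *\<^sub>R mat 1"
  unfolding mat3_eq_iff forall_3
  by (simp add: matrix_matrix_mult_def sum_3 det_3 adj3_def mat_def vector_3) algebra

lemma adj3_matrix_mul: "adj3 A ** A = det A *\<^sub>R mat 1"
  unfolding mat3_eq_iff forall_3
  by (simp add: matrix_matrix_mult_def sum_3 det_3 adj3_def mat_def vector_3) algebra

lemma matrix_inv_adj3:
  assumes "det A \<noteq> 0"
  shows "matrix_inv A = (1 / det A) *\<^sub>R adj3 A"
  using assms
  by (intro matrix_inv_unique)
    (simp_all add: matrix_mul_scaleR_right matrix_mul_scaleR_left matrix_mul_adj3 adj3_matrix_mul)

lemma matrix_inv_row: "h ** g = mat 1 \<Longrightarrow> S (\<lambda>j. h$i$j * g$j$l) = (if i = l then 1 else (0::real))"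
  by (simp add: vec_eq_iff matrix_matrix_mult_def mat_def)

lemma transpose_mul_self_entry: "(transpose T ** T) $ x $ y = S (\<lambda>a. T$a$x * T$a$y)"
  by (simp add: matrix_matrix_mult_def transpose_def)

lemma mul_transpose_self_entry: "(L ** transpose L) $ x $ y = S (\<lambda>a. L$x$a * L$y$a)"
  by (simp add: matrix_matrix_mult_def transpose_def)

lemma quadratic_form_sum: "x \<bullet> ((A::mat3) *v x) = S (\<lambda>i. S (\<lambda>j. x$i * A$i$j * x$j))"
  by (simp add: inner_vec_def matrix_vector_mult_def sum_distrib_left mult_ac)

lemma posdef3_symmetric: "posdef3 A \<Longrightarrow> A$i$j = A$j$i"
  by (simp add: posdef3_def symm3_def)

lemma posdef3_quadratic_nonneg:
  assumes "posdef3 g"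
  shows "S (\<lambda>i. S (\<lambda>j. g$i$j * u$i * u$j)) \<ge> 0"
proof -
  have "u \<bullet> (g *v u) \<ge> 0"
    using assms by (cases "u = 0") (auto simp: posdef3_def intro: less_imp_le)
  then show ?thesis unfolding quadratic_form_sum by (simp add: mult_ac)
qed

lemma posdef3_entry11_pos: assumes "posdef3 A" shows "A$1$1 > 0"
proof -
  let ?x = "vector [1,0,0] :: real^3"
  have "?x \<noteq> 0" by (simp add: vec3_eq_iff vector_3)
  then have "?x \<bullet> (A *v ?x) > 0" using assms posdef3_def by blast
  then show ?thesis by (simp add: quadratic_form_sum sum_3 vector_3)
qed

lemma posdef3_leading_minor_pos: assumes "posdef3 A" shows "A$1$1*A$2$2 - A$1$2*A$2$1 > 0"
proof -
  have s: "A$2$1 = A$1$2" using assms by (rule posdef3_symmetric)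
  have a: "A$1$1 > 0" by (rule posdef3_entry11_pos[OF assms])
  let ?x = "vector [- A$1$2, A$1$1, 0] :: real^3"
  have "?x \<noteq> 0" using a by (simp add: vec3_eq_iff vector_3)
  then have "?x \<bullet> (A *v ?x) > 0" using assms posdef3_def by blast
  then have "A$1$1 * (A$1$1*A$2$2 - A$1$2*A$2$1) > 0"
    by (simp add: quadratic_form_sum sum_3 vector_3 s) (simp add: algebra_simps power2_eq_square)
  then show ?thesis using a by (simp add: zero_less_mult_iff)
qed

lemma posdef3_det_pos: assumes "posdef3 A" shows "det A > 0"
proof -
  have m: "A$1$1*A$2$2 - A$1$2*A$2$1 > 0" by (rule posdef3_leading_minor_pos[OF assms])
  let ?x = "vector [A$2$1*A$3$2 - A$2$2*A$3$1, A$1$2*A$3$1 - A$1$1*A$3$2,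
                    A$1$1*A$2$2 - A$1$2*A$2$1] :: real^3"
  have "?x \<noteq> 0" using m by (simp add: vec3_eq_iff vector_3)
  then have "?x \<bullet> (A *v ?x) > 0" using assms posdef3_def by blast
  moreover have "?x \<bullet> (A *v ?x) = det A * (A$1$1*A$2$2 - A$1$2*A$2$1)"
    by (simp add: quadratic_form_sum sum_3 vector_3 det_3) algebra
  ultimately show ?thesis using m by (simp add: zero_less_mult_iff)
qed

lemma posdef3_matrix_inv:
  assumes pd: "posdef3 g"
  shows "matrix_inv g ** g = mat 1" "g ** matrix_inv g = mat 1"
    "matrix_inv g $ i $ j = matrix_inv g $ j $ i" "posdef3 (matrix_inv g)"
proof -
  have d: "det g \<noteq> 0" using posdef3_det_pos[OF pd] by simp
  have s: "g$2$1 = g$1$2" "g$3$1 = g$1$3" "g$3$2 = g$2$3" using pd by (auto simp: posdef3_symmetric)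
  show "matrix_inv g ** g = mat 1"
    using d by (simp add: matrix_inv_adj3 matrix_mul_scaleR_left adj3_matrix_mul)
  show r: "g ** matrix_inv g = mat 1"
    using d by (simp add: matrix_inv_adj3 matrix_mul_scaleR_right matrix_mul_adj3)
  have sym: "\<forall>i j. matrix_inv g $ i $ j = matrix_inv g $ j $ i"
    unfolding forall_3 matrix_inv_adj3[OF d] adj3_def using s by (simp add: vector_3)
  then show "matrix_inv g $ i $ j = matrix_inv g $ j $ i" by blast
  show "posdef3 (matrix_inv g)"
    unfolding posdef3_def symm3_def
  proof (intro conjI allI impI)
    fix i j show "matrix_inv g $ i $ j = matrix_inv g $ j $ i" using sym by blast
  next
    fix x :: "real^3" assume x: "x \<noteq> 0"
    let ?y = "matrix_inv g *v x"
    have gy: "g *v ?y = x" by (simp add: matrix_vector_mul_assoc r)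
    then have "?y \<noteq> 0" using x by auto
    then have "?y \<bullet> (g *v ?y) > 0" using pd posdef3_def by blast
    then show "x \<bullet> (matrix_inv g *v x) > 0" using gy by (simp add: inner_commute)
  qed
qed

definition chol :: "mat3 \<Rightarrow> mat3" where
  "chol A = (let l11 = sqrt (A$1$1); l21 = A$2$1 / l11; l31 = A$3$1 / l11;
       l22 = sqrt (A$2$2 - l21^2); l32 = (A$3$2 - l31*l21) / l22;
       l33 = sqrt (A$3$3 - l31^2 - l32^2)
     in vector [vector [l11, 0, 0], vector [l21, l22, 0], vector [l31, l32, l33]])"

lemma posdef3_schur_complement:
  assumes "posdef3 A"
  shows "A$3$3 - A$1$3^2 / A$1$1
        - (A$2$3 - A$1$3*A$1$2/A$1$1)^2 / ((A$1$1*A$2$2 - A$1$2*A$1$2)/A$1$1)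
       = det A / (A$1$1*A$2$2 - A$1$2*A$2$1)"
proof -
  have s: "A$2$1 = A$1$2" "A$3$1 = A$1$3" "A$3$2 = A$2$3"
    using assms by (auto simp: posdef3_symmetric)
  have a: "A$1$1 > 0" and m: "A$1$1*A$2$2 - A$1$2*A$1$2 > 0"
    using posdef3_entry11_pos[OF assms] posdef3_leading_minor_pos[OF assms] s by auto
  then have "A$3$3 - A$1$3^2 / A$1$1
        - (A$2$3 - A$1$3*A$1$2/A$1$1)^2 / ((A$1$1*A$2$2 - A$1$2*A$1$2)/A$1$1)
      = (A$1$1*A$2$2*A$3$3 + 2*A$1$2*A$2$3*A$1$3 - A$1$1*A$2$3^2 - A$2$2*A$1$3^2
        - A$3$3*A$1$2^2)/(A$1$1*A$2$2 - A$1$2*A$1$2)"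
    by (simp add: field_simps power2_eq_square)
  also have "\<dots> = det A / (A$1$1*A$2$2 - A$1$2*A$2$1)"
    by (simp add: det_3 s power2_eq_square algebra_simps)
  finally show ?thesis .
qed

lemma cholesky3:
  assumes "posdef3 A"
  shows "chol A ** transpose (chol A) = A" and "det (chol A) > 0"
proof -
  have s: "A$2$1 = A$1$2" "A$3$1 = A$1$3" "A$3$2 = A$2$3"
    using assms by (auto simp: posdef3_symmetric)
  have a: "A$1$1 > 0" by (rule posdef3_entry11_pos[OF assms])
  have m: "A$1$1*A$2$2 - A$1$2*A$2$1 > 0" by (rule posdef3_leading_minor_pos[OF assms])
  have d: "det A > 0" by (rule posdef3_det_pos[OF assms])
  define l11 where "l11 = sqrt (A$1$1)"
  define l21 where "l21 = A$2$1 / l11"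
  define l31 where "l31 = A$3$1 / l11"
  define r2 where "r2 = A$2$2 - l21^2"
  define l22 where "l22 = sqrt r2"
  define l32 where "l32 = (A$3$2 - l31*l21) / l22"
  define r3 where "r3 = A$3$3 - l31^2 - l32^2"
  define l33 where "l33 = sqrt r3"
  have l11p: "l11 > 0" and l11s: "l11^2 = A$1$1" using a by (auto simp: l11_def)
  have r2e: "r2 = (A$1$1*A$2$2 - A$1$2*A$2$1) / A$1$1"
    unfolding r2_def l21_def using a l11s s by (simp add: field_simps power2_eq_square)
  have l22p: "l22 > 0" and l22s: "l22^2 = r2" using r2e a m by (auto simp: l22_def)
  have q: "l11 * l11 = A$1$1" using l11s by (simp add: power2_eq_square)
  have q2: "l22^2 = (A$1$1*A$2$2 - A$1$2*A$1$2) / A$1$1" using l22s r2e s by simp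
  have "r3 = A$3$3 - A$1$3^2 / A$1$1
      - (A$2$3 - A$1$3*A$1$2/A$1$1)^2 / ((A$1$1*A$2$2 - A$1$2*A$1$2)/A$1$1)"
    unfolding r3_def l32_def l31_def l21_def
    using l11p l22p q q2 s l11s by (simp add: power_divide power_mult_distrib)
  then have r3e: "r3 = det A / (A$1$1*A$2$2 - A$1$2*A$2$1)"
    using posdef3_schur_complement[OF assms] by simp
  have l33p: "l33 > 0" and l33s: "l33^2 = r3" using r3e d m by (auto simp: l33_def)
  have cdef: "chol A = vector [vector [l11, 0, 0], vector [l21, l22, 0], vector [l31, l32, l33]]"
    unfolding chol_def Let_def l11_def l21_def l31_def l22_def l32_def l33_def r2_def r3_def ..
  show "det (chol A) > 0" unfolding cdef using l11p l22p l33p by (simp add: det_3 vector_3)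
  have "l11 * l11 = A$1$1" "l21 * l11 = A$2$1" "l31 * l11 = A$3$1"
    "l21*l21 + l22*l22 = A$2$2" "l31*l21 + l32*l22 = A$3$2" "l31*l31 + l32*l32 + l33*l33 = A$3$3"
    using l11s l11p l22s l22p l33s unfolding l21_def l31_def l32_def r2_def r3_def
    by (simp_all add: power2_eq_square)
  then show "chol A ** transpose (chol A) = A"
    unfolding mat3_eq_iff forall_3 cdef
    by (simp add: matrix_matrix_mult_def sum_3 vector_3 transpose_def s mult.commute)
qed

section \<open>Scalar curvature in an orthonormal frame\<close>

text \<open>The rows of \<open>T\<close> are the components of a \<open>g\<close>-orthonormal frame.\<close>

definition orthonormal_frame :: "mat3 \<Rightarrow> mat3 \<Rightarrow> bool" where
  "orthonormal_frame g T \<longleftrightarrow> matrix_inv g = transpose T ** T"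

lemma orthonormal_frameD:
  "orthonormal_frame g T \<Longrightarrow> matrix_inv g $ x $ y = S (\<lambda>a. T$a$x * T$a$y)"
  by (simp add: orthonormal_frame_def transpose_mul_self_entry)

lemma orthonormal_frame_exists:
  assumes "posdef3 g"
  obtains T where "orthonormal_frame g T" "det T > 0"
proof
  let ?L = "chol (matrix_inv g)"
  have "?L ** transpose ?L = matrix_inv g" "det ?L > 0"
    using cholesky3 posdef3_matrix_inv(4)[OF assms] by auto
  then show "orthonormal_frame g (transpose ?L)" "det (transpose ?L) > 0"
    by (simp_all add: orthonormal_frame_def)
qed

type_synonym t3 = "3 \<Rightarrow> 3 \<Rightarrow> 3 \<Rightarrow> real"

definition lower_sc :: "sconst \<Rightarrow> mat3 \<Rightarrow> t3" where
  "lower_sc C g k i j = S (\<lambda>m. g$k$m * C m i j)"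

definition koszul :: "t3 \<Rightarrow> t3" where
  "koszul c k i j = - c i j k + c j k i + c k i j"

definition frame_tensor :: "mat3 \<Rightarrow> t3 \<Rightarrow> t3" where
  "frame_tensor T c d a b = S (\<lambda>p. S (\<lambda>i. S (\<lambda>j. T$d$p * T$a$i * T$b$j * c p i j)))"

text \<open>The Ricci tensor written with the inverse metric \<open>h\<close>, the lowered structure constants \<open>c\<close>
  and \<open>G = koszul c\<close>, so that it transforms tensorially under a change of frame.\<close>

definition ricci_lowered :: "mat3 \<Rightarrow> t3 \<Rightarrow> t3 \<Rightarrow> 3 \<Rightarrow> 3 \<Rightarrow> real" where
  "ricci_lowered h c G i j =
       1/4 * S (\<lambda>l. S (\<lambda>m. S (\<lambda>k. h$l$k * G k l m) * S (\<lambda>k. h$m$k * G k j i)))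
     - 1/4 * S (\<lambda>l. S (\<lambda>m. S (\<lambda>k. h$m$k * G k j l) * S (\<lambda>k. h$l$k * G k m i)))
     - 1/2 * S (\<lambda>l. S (\<lambda>m. S (\<lambda>k. h$l$k * c k m j) * S (\<lambda>k. h$m$k * G k l i)))"

lemma gam_lower_sc: "gam C g l i j = 1/2 * S (\<lambda>k. matrix_inv g $l$k * koszul (lower_sc C g) k i j)"
  unfolding gam_def koszul_def lower_sc_def by (simp add: mult.commute)

lemma raise_lower_sc:
  assumes "h ** g = mat 1"
  shows "C l m j = S (\<lambda>k. h$l$k * lower_sc C g k m j)"
proof -
  have "S (\<lambda>k. h$l$k * lower_sc C g k m j) = S (\<lambda>k. S (\<lambda>p. h$l$k * g$k$p * C p m j))"
    unfolding lower_sc_def by (simp add: sum_distrib_left mult.assoc)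
  also have "\<dots> = S (\<lambda>p. S (\<lambda>k. h$l$k * g$k$p) * C p m j)"
    by (subst sum.swap) (simp add: sum_distrib_right)
  also have "\<dots> = C l m j"
    using exhaust_3[of l] by (auto simp: matrix_inv_row[OF assms] sum_3)
  finally show ?thesis by simp
qed

lemma Ric_eq_ricci_lowered:
  assumes "matrix_inv g ** g = mat 1"
  shows "Ric C g i j = ricci_lowered (matrix_inv g) (lower_sc C g) (koszul (lower_sc C g)) i j"
proof -
  let ?h = "matrix_inv g" and ?c = "lower_sc C g"
  have "Ric C g i j = S (\<lambda>l. S (\<lambda>m.
      1/4 * (S (\<lambda>k. ?h$l$k * koszul ?c k l m) * S (\<lambda>k. ?h$m$k * koszul ?c k j i))
    - 1/4 * (S (\<lambda>k. ?h$m$k * koszul ?c k j l) * S (\<lambda>k. ?h$l$k * koszul ?c k m i))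
    - 1/2 * (S (\<lambda>k. ?h$l$k * ?c k m j) * S (\<lambda>k. ?h$m$k * koszul ?c k l i))))"
    unfolding Ric_def gam_lower_sc
    by (intro sum.cong[OF refl]) (subst raise_lower_sc[OF assms, of C], simp add: algebra_simps)
  also have "\<dots> = ricci_lowered ?h ?c (koszul ?c) i j"
    unfolding ricci_lowered_def
    by (simp only: sum_distrib_left[of "1/4"] sum_distrib_left[of "1/2"] sum_subtractf)
  finally show ?thesis .
qed

lemma ricci_lowered_mat1:
  "ricci_lowered (mat 1) c G a b = 1/4 * S (\<lambda>l. S (\<lambda>m. G l l m * G m b a))
     - 1/4 * S (\<lambda>l. S (\<lambda>m. G m b l * G l m a)) - 1/2 * S (\<lambda>l. S (\<lambda>m. c l m b * G m l a))"
  by (simp add: ricci_lowered_def sum_mat1)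

lemma ricci_lowered_frame_tensor:
  assumes "h = transpose T ** T"
  shows "S (\<lambda>i. S (\<lambda>j. T$a$i * T$b$j * ricci_lowered h c G i j))
       = ricci_lowered (mat 1) (frame_tensor T c) (frame_tensor T G) a b"
proof -
  have h: "h$x$y = S (\<lambda>e. T$e$x * T$e$y)" for x y
    using assms transpose_mul_self_entry by simp
  have lin: "S (\<lambda>i. S (\<lambda>j. T$a$i * T$b$j * (1/4 * X i j - 1/4 * Y i j - 1/2 * Z i j)))
      = 1/4 * S (\<lambda>i. S (\<lambda>j. T$a$i * T$b$j * X i j)) - 1/4 * S (\<lambda>i. S (\<lambda>j. T$a$i * T$b$j * Y i j))
        - 1/2 * S (\<lambda>i. S (\<lambda>j. T$a$i * T$b$j * Z i j))" for X Y Z :: "3 \<Rightarrow> 3 \<Rightarrow> real"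
    unfolding sum_3 by algebra
  have "S (\<lambda>i. S (\<lambda>j. T$a$i * T$b$j * S (\<lambda>l. S (\<lambda>m. S (\<lambda>k. h$l$k * G k l m) * S (\<lambda>k. h$m$k * G k j i)))))
      = S (\<lambda>l. S (\<lambda>m. frame_tensor T G l l m * frame_tensor T G m b a))"
    and "S (\<lambda>i. S (\<lambda>j. T$a$i * T$b$j * S (\<lambda>l. S (\<lambda>m. S (\<lambda>k. h$m$k * G k j l) * S (\<lambda>k. h$l$k * G k m i)))))
      = S (\<lambda>l. S (\<lambda>m. frame_tensor T G m b l * frame_tensor T G l m a))"
    and "S (\<lambda>i. S (\<lambda>j. T$a$i * T$b$j * S (\<lambda>l. S (\<lambda>m. S (\<lambda>k. h$l$k * c k m j) * S (\<lambda>k. h$m$k * G k l i)))))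
      = S (\<lambda>l. S (\<lambda>m. frame_tensor T c l m b * frame_tensor T G m l a))"
    unfolding frame_tensor_def h sum_3 by algebra+
  then show ?thesis
    unfolding ricci_lowered_mat1 unfolding ricci_lowered_def lin by simp
qed

lemma Rscal_mat1: "Rscal D (mat 1) = S (\<lambda>a. ricci_lowered (mat 1) D (koszul D) a a)"
proof -
  have "lower_sc D (mat 1) = D" by (simp add: lower_sc_def sum_mat1 fun_eq_iff)
  then show ?thesis
    unfolding Rscal_def Ric_eq_ricci_lowered[of "mat 1", unfolded matrix_inv_mat1, simplified]
    by (simp add: sum_mat1 matrix_inv_mat1)
qed

lemma koszul_frame_tensor: "koszul (frame_tensor T c) = frame_tensor T (koszul c)"
  unfolding fun_eq_iff koszul_def frame_tensor_def sum_3 by (intro allI) algebra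

lemma Rscal_orthonormal_frame:
  assumes inv: "matrix_inv g ** g = mat 1" and T: "orthonormal_frame g T"
  shows "Rscal C g = Rscal (frame_tensor T (lower_sc C g)) (mat 1)"
proof -
  let ?h = "matrix_inv g" and ?c = "lower_sc C g"
  let ?F = "\<lambda>i j. ricci_lowered ?h ?c (koszul ?c) i j"
  have "Rscal C g = S (\<lambda>i. S (\<lambda>j. ?h$i$j * ?F i j))"
    unfolding Rscal_def Ric_eq_ricci_lowered[OF inv] ..
  also have "\<dots> = S (\<lambda>a. S (\<lambda>i. S (\<lambda>j. T$a$i * T$a$j * ?F i j)))"
    unfolding orthonormal_frameD[OF T] sum_3 by algebra
  also have "\<dots> = S (\<lambda>a. ricci_lowered (mat 1) (frame_tensor T ?c) (frame_tensor T (koszul ?c)) a a)"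
    using T by (simp add: ricci_lowered_frame_tensor orthonormal_frame_def)
  also have "\<dots> = Rscal (frame_tensor T ?c) (mat 1)"
    unfolding Rscal_mat1 koszul_frame_tensor ..
  finally show ?thesis .
qed

text \<open>With respect to an orthonormal frame the structure constants decompose as
  \<open>D\<^sup>k\<^sub>i\<^sub>j = \<epsilon>\<^sub>i\<^sub>j\<^sub>l n\<^sup>l\<^sup>k + a\<^sub>i \<delta>\<^sup>k\<^sub>j - a\<^sub>j \<delta>\<^sup>k\<^sub>i\<close> (Bianchi's classification);
  \<open>bianchi_n\<close> and \<open>bianchi_a\<close> extract \<open>n\<close> and \<open>a\<close>.\<close>

definition bianchi_n :: "t3 \<Rightarrow> 3 \<Rightarrow> 3 \<Rightarrow> real" where
  "bianchi_n D l k = 1/4 * S (\<lambda>i. S (\<lambda>j. eps l i j * D k i j + eps k i j * D l i j))"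

definition bianchi_a :: "t3 \<Rightarrow> 3 \<Rightarrow> real" where
  "bianchi_a D j = -1/2 * S (\<lambda>k. D k k j)"

definition trace_sq_defect :: "t3 \<Rightarrow> real" where
  "trace_sq_defect D = S (\<lambda>l. S (\<lambda>k. (bianchi_n D l k)^2)) - 1/2 * (S (\<lambda>l. bianchi_n D l l))^2"

lemma eps_simps:
  "eps 1 2 3 = 1" "eps 2 3 1 = 1" "eps 3 1 2 = 1"
  "eps 1 3 2 = -1" "eps 3 2 1 = -1" "eps 2 1 3 = -1"
  "eps 1 1 1 = 0" "eps 1 1 2 = 0" "eps 1 1 3 = 0" "eps 1 2 1 = 0" "eps 1 2 2 = 0"
  "eps 1 3 1 = 0" "eps 1 3 3 = 0" "eps 2 1 1 = 0" "eps 2 1 2 = 0" "eps 2 2 1 = 0"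
  "eps 2 2 2 = 0" "eps 2 2 3 = 0" "eps 2 3 2 = 0" "eps 2 3 3 = 0" "eps 3 1 1 = 0"
  "eps 3 1 3 = 0" "eps 3 2 2 = 0" "eps 3 2 3 = 0" "eps 3 3 1 = 0" "eps 3 3 2 = 0" "eps 3 3 3 = 0"
  by (simp_all add: eps_def)

lemma antisym_scD:
  assumes "antisym_sc D"
  shows "D k 1 1 = 0" "D k 2 2 = 0" "D k 3 3 = 0"
    "D k 2 1 = - D k 1 2" "D k 3 1 = - D k 1 3" "D k 3 2 = - D k 2 3"
  using assms unfolding antisym_sc_def by (metis add.inverse_inverse neg_equal_zero)+

lemma bianchi_n_sym: "bianchi_n D l k = bianchi_n D k l"
  by (simp add: bianchi_n_def add.commute)

lemma Rscal_mat1_bianchi: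
  assumes "antisym_sc D"
  shows "Rscal D (mat 1) = - trace_sq_defect D - 6 * S (\<lambda>j. (bianchi_a D j)^2)"
  unfolding Rscal_mat1 ricci_lowered_mat1 trace_sq_defect_def bianchi_n_def bianchi_a_def koszul_def
    sum_3 eps_simps antisym_scD[OF assms]
  by (simp add: field_simps power2_eq_square)

lemma jacobi_sum_bianchi:
  assumes "antisym_sc D"
  shows "S (\<lambda>l. D l 1 2 * D m l 3 + D l 2 3 * D m l 1 + D l 3 1 * D m l 2)
       = 2 * S (\<lambda>k. bianchi_n D m k * bianchi_a D k)"
proof -
  have "\<forall>m. S (\<lambda>l. D l 1 2 * D m l 3 + D l 2 3 * D m l 1 + D l 3 1 * D m l 2)
       = 2 * S (\<lambda>k. bianchi_n D m k * bianchi_a D k)"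
    unfolding forall_3 bianchi_n_def bianchi_a_def sum_3 eps_simps antisym_scD[OF assms]
    by (simp add: field_simps)
  then show ?thesis by blast
qed

lemma sc_eq_eps_bianchi_n:
  assumes as: "antisym_sc D" and a0: "\<And>j. bianchi_a D j = 0"
  shows "D k i j = S (\<lambda>l. eps i j l * bianchi_n D l k)"
proof -
  have tr: "D 1 1 j + D 2 2 j + D 3 3 j = 0" for j
    using a0[of j] by (simp add: bianchi_a_def sum_3)
  have "\<forall>k i j. D k i j = S (\<lambda>l. eps i j l * bianchi_n D l k)"
    using tr[of 1] tr[of 2] tr[of 3]
    unfolding forall_3 bianchi_n_def sum_3 eps_simps antisym_scD[OF as]
    by (intro conjI; simp add: field_simps; linarith?)
  then show ?thesis by blast
qed

text \<open>A symmetric matrix with \<open>tr N\<^sup>2 < (tr N)\<^sup>2/2\<close> is definite with the sign of its trace.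
  With \<open>w = 3q - s r\<close> a sum of squares identity gives \<open>6 r\<^sup>2 w\<^sup>2 \<le> 4 r\<^sup>4 t\<close>, and the hypothesis
  says \<open>t < 3 s\<^sup>2/2\<close>, hence \<open>|w| < r |s|\<close>, which forces \<open>s q > 0\<close>.\<close>

lemma trace_mul_quadratic_form_pos:
  fixes a b c d e f x y z :: real
  assumes Q: "a^2+b^2+c^2+2*(d^2+e^2+f^2) - (a+b+c)^2/2 < 0" and nz: "x^2+y^2+z^2 > 0"
  shows "(a+b+c) * (a*x^2 + b*y^2 + c*z^2 + 2*d*x*y + 2*e*x*z + 2*f*y*z) > 0"
proof -
  define s where "s = a + b + c"
  define r where "r = x^2 + y^2 + z^2"
  define q where "q = a*x^2 + b*y^2 + c*z^2 + 2*d*x*y + 2*e*x*z + 2*f*y*z"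
  define w where "w = 3*q - s*r"
  define tz where "tz = (3*a-s)^2 + (3*b-s)^2 + (3*c-s)^2 + 18*(d^2+e^2+f^2)"
  have sos: "4 * r^4 * tz
       = (2*r^2*(3*a-s) - w*(3*x^2 - r))^2 + (2*r^2*(3*b-s) - w*(3*y^2 - r))^2
         + (2*r^2*(3*c-s) - w*(3*z^2 - r))^2
         + 2*((2*r^2*(3*d) - w*(3*x*y))^2 + (2*r^2*(3*e) - w*(3*x*z))^2 + (2*r^2*(3*f) - w*(3*y*z))^2)
         + 6 * r^2 * w^2"
    unfolding tz_def w_def q_def r_def s_def by algebra
  have le: "6 * r^2 * w^2 \<le> 4 * r^4 * tz"
  proof -
    have "0 \<le> (2*r^2*(3*a-s) - w*(3*x^2 - r))^2 + (2*r^2*(3*b-s) - w*(3*y^2 - r))^2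
         + (2*r^2*(3*c-s) - w*(3*z^2 - r))^2
         + 2*((2*r^2*(3*d) - w*(3*x*y))^2 + (2*r^2*(3*e) - w*(3*x*z))^2 + (2*r^2*(3*f) - w*(3*y*z))^2)"
      by (intro add_nonneg_nonneg mult_nonneg_nonneg) simp_all
    then show ?thesis using sos by linarith
  qed
  have rp: "r > 0" using nz r_def by simp
  have "tz = 9 * (a^2+b^2+c^2+2*(d^2+e^2+f^2) - (a+b+c)^2/2) + 3/2 * s^2"
    unfolding tz_def s_def by (simp add: field_simps power2_eq_square)
  then have "tz < 3/2 * s^2" using Q by simp
  then have "4 * r^4 * tz < 4 * r^4 * (3/2 * s^2)" using rp by simp
  with le have "6 * r^2 * w^2 < 4 * r^4 * (3/2 * s^2)" by linarith
  then have "r^2 * w^2 < r^2 * (r * s)^2" by (simp add: power2_eq_square power4_eq_xxxx algebra_simps)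
  then have w2: "w^2 < (r * s)^2" using rp by (simp add: mult_less_cancel_left_pos)
  have "s \<noteq> 0" using w2 by auto
  have "(s * w)^2 = s^2 * w^2" by (simp add: power_mult_distrib)
  also have "\<dots> < s^2 * (r * s)^2" using w2 \<open>s \<noteq> 0\<close> by simp
  also have "\<dots> = (s^2 * r)^2" by (simp add: power2_eq_square)
  finally have "(- (s * w))^2 < (s^2 * r)^2" by simp
  then have "- (s * w) < s^2 * r" by (rule power2_less_imp_less) (use rp in simp)
  then have "3 * (s * q) > 0" unfolding w_def by (simp add: algebra_simps power2_eq_square)
  then show ?thesis unfolding s_def q_def by simp
qed

lemma vec3_norm_sq_pos: "(x::real^3) \<noteq> 0 \<Longrightarrow> x$1^2 + x$2^2 + x$3^2 > 0"
  by (simp add: vec3_eq_iff) (smt (verit) zero_less_power2 zero_le_power2)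

lemma trace_mul_bianchi_n_pos:
  assumes Q: "trace_sq_defect D < 0" and x: "x \<noteq> 0"
  shows "S (\<lambda>l. bianchi_n D l l) * S (\<lambda>l. S (\<lambda>k. x$l * bianchi_n D l k * x$k)) > 0"
proof -
  let ?n = "bianchi_n D"
  have sym: "?n 2 1 = ?n 1 2" "?n 3 1 = ?n 1 3" "?n 3 2 = ?n 2 3" by (simp_all add: bianchi_n_sym)
  have e: "S (\<lambda>l. S (\<lambda>k. x$l * ?n l k * x$k)) = ?n 1 1 * (x$1)^2 + ?n 2 2 * (x$2)^2 + ?n 3 3 * (x$3)^2
     + 2 * ?n 1 2 * x$1 * x$2 + 2 * ?n 1 3 * x$1 * x$3 + 2 * ?n 2 3 * x$2 * x$3"
    unfolding sum_3 sym by (simp add: power2_eq_square algebra_simps)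
  have "(?n 1 1 + ?n 2 2 + ?n 3 3) * (?n 1 1 * (x$1)^2 + ?n 2 2 * (x$2)^2 + ?n 3 3 * (x$3)^2
     + 2 * ?n 1 2 * x$1 * x$2 + 2 * ?n 1 3 * x$1 * x$3 + 2 * ?n 2 3 * x$2 * x$3) > 0"
    using Q vec3_norm_sq_pos[OF x] unfolding trace_sq_defect_def sum_3 sym
    by (intro trace_mul_quadratic_form_pos) simp_all
  then show ?thesis unfolding e by (simp add: sum_3)
qed

text \<open>The Jacobi identity says \<open>n a = 0\<close>, which is impossible for a definite \<open>n\<close> unless \<open>a = 0\<close>.\<close>

lemma bianchi_a_eq_0:
  assumes as: "antisym_sc D" and jac: "jacobi_sc D" and Q: "trace_sq_defect D < 0"
  shows "bianchi_a D j = 0"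
proof (rule ccontr)
  assume "bianchi_a D j \<noteq> 0"
  define v :: "real^3" where "v = (\<chi> i. bianchi_a D i)"
  have "v \<noteq> 0" using \<open>bianchi_a D j \<noteq> 0\<close> by (metis v_def vec_lambda_beta zero_index)
  then have pos: "S (\<lambda>l. bianchi_n D l l) * S (\<lambda>l. S (\<lambda>k. v$l * bianchi_n D l k * v$k)) > 0"
    by (rule trace_mul_bianchi_n_pos[OF Q])
  have "S (\<lambda>k. bianchi_n D m k * bianchi_a D k) = 0" for m
    using jac jacobi_sum_bianchi[OF as, of m] unfolding jacobi_sc_def by simp
  then have "S (\<lambda>l. S (\<lambda>k. v$l * bianchi_n D l k * v$k)) = 0"
    by (simp add: v_def sum_distrib_left[symmetric] mult.assoc)
  with pos show False by simp
qed

lemma eps_det: "S (\<lambda>i. S (\<lambda>j. S (\<lambda>l. eps i j l * L$i$a * L$j$b * L$l$m))) = det (L::mat3) * eps a b m"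
proof -
  have "\<forall>a b m. S (\<lambda>i. S (\<lambda>j. S (\<lambda>l. eps i j l * L$i$a * L$j$b * L$l$m))) = det L * eps a b m"
    unfolding forall_3 sum_3 eps_simps det_3 by (intro conjI) algebra+
  then show ?thesis by blast
qed

text \<open>If \<open>D\<^sup>k\<^sub>i\<^sub>j = \<pm>\<epsilon>\<^sub>i\<^sub>j\<^sub>l (L L\<^sup>T)\<^sup>l\<^sup>k\<close> with \<open>det L > 0\<close>, the basis
  \<open>f\<^sub>a = (\<pm>1/det L) L\<^sup>i\<^sub>a e\<^sub>i\<close> satisfies \<open>[f\<^sub>a,f\<^sub>b] = \<epsilon>\<^sub>a\<^sub>b\<^sub>c f\<^sub>c\<close>.\<close>

lemma bianchi_IX_of_eps_gram:
  fixes D :: t3 and L :: mat3 and t :: real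
  assumes t: "t = 1 \<or> t = -1" and dL: "det L > 0"
    and D: "\<And>k i j. D k i j = S (\<lambda>l. eps i j l * (t * S (\<lambda>m. L$l$m * L$k$m)))"
  shows "bianchi_IX D"
  unfolding bianchi_IX_def
proof (intro exI conjI allI)
  define s where "s = t / det L"
  let ?P = "s *\<^sub>R transpose L"
  have P: "?P $ x $ y = s * L$y$x" for x y by (simp add: transpose_def)
  have "det ?P = s^3 * det L"
    by (simp add: det_3 transpose_def power3_eq_cube) algebra
  then show "invertible ?P" using dL t by (auto simp: invertible_det_nz s_def)
  fix a b k
  have "S (\<lambda>i. S (\<lambda>j. ?P $ a $ i * ?P $ b $ j * D k i j))
     = s^2 * t * S (\<lambda>m. L$k$m * S (\<lambda>i. S (\<lambda>j. S (\<lambda>l. eps i j l * L$i$a * L$j$b * L$l$m))))"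
    unfolding P D sum_3 by algebra
  also have "\<dots> = s^2 * t * det L * S (\<lambda>m. L$k$m * eps a b m)"
    unfolding eps_det by (simp add: sum_distrib_left mult_ac)
  also have "\<dots> = S (\<lambda>c. eps a b c * ?P $ c $ k)"
    unfolding P s_def using dL t
    by (auto simp: sum_distrib_left power2_eq_square field_simps transpose_def)
  finally show "S (\<lambda>i. S (\<lambda>j. ?P $ a $ i * ?P $ b $ j * D k i j)) = S (\<lambda>c. eps a b c * ?P $ c $ k)" .
qed

lemma bianchi_IX_of_trace_sq_defect_neg:
  assumes as: "antisym_sc D" and jac: "jacobi_sc D" and Q: "trace_sq_defect D < 0"
  shows "bianchi_IX D"
proof -
  let ?n = "bianchi_n D"
  define t where "t = (if S (\<lambda>l. ?n l l) > 0 then 1 else (-1::real))"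
  define N :: mat3 where "N = (\<chi> l k. t * ?n l k)"
  have "posdef3 N"
    unfolding posdef3_def symm3_def
  proof (intro conjI allI impI)
    fix i j show "N $ i $ j = N $ j $ i" by (simp add: N_def bianchi_n_sym)
  next
    fix x :: "real^3" assume "x \<noteq> 0"
    then have "S (\<lambda>l. ?n l l) * S (\<lambda>l. S (\<lambda>k. x$l * ?n l k * x$k)) > 0"
      by (rule trace_mul_bianchi_n_pos[OF Q])
    moreover have "x \<bullet> (N *v x) = t * S (\<lambda>l. S (\<lambda>k. x$l * ?n l k * x$k))"
      unfolding quadratic_form_sum N_def by (simp add: sum_distrib_left mult_ac)
    ultimately show "x \<bullet> (N *v x) > 0" unfolding t_def by (auto simp: zero_less_mult_iff)
  qed
  then have LL: "chol N ** transpose (chol N) = N" and dL: "det (chol N) > 0"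
    using cholesky3 by auto
  have "t * t = 1" by (simp add: t_def)
  then have "?n l k = t * (N $ l $ k)" for l k by (simp add: N_def mult.assoc[symmetric])
  moreover have "N $ l $ k = S (\<lambda>m. chol N $l$m * chol N $k$m)" for l k
    using mul_transpose_self_entry[of "chol N" l k] by (simp add: LL)
  ultimately have n: "?n l k = t * S (\<lambda>m. chol N $l$m * chol N $k$m)" for l k by simp
  show ?thesis
    by (rule bianchi_IX_of_eps_gram[of t, OF _ dL])
      (simp add: t_def, simp add: sc_eq_eps_bianchi_n[OF as bianchi_a_eq_0[OF as jac Q]] n)
qed

section \<open>Nonpositivity of the scalar curvature for types I--VIII\<close>

lemma frame_tensor_lower_sc_antisym:
  assumes "antisym_sc C"
  shows "antisym_sc (frame_tensor T (lower_sc C g))"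
proof -
  have a: "lower_sc C g p i j = - lower_sc C g p j i" for p i j
  proof -
    have "lower_sc C g p i j = S (\<lambda>m. - (g$p$m * C m j i))"
      using assms unfolding lower_sc_def antisym_sc_def by (metis mult_minus_right)
    then show ?thesis by (simp add: sum_negf lower_sc_def)
  qed
  then have "lower_sc C g p i i = 0" for p i by (metis add.inverse_inverse neg_equal_zero)
  then show ?thesis
    unfolding antisym_sc_def frame_tensor_def sum_3 using a[of _ 2 1] a[of _ 3 1] a[of _ 3 2]
    by (simp add: algebra_simps)
qed

lemma frame_tensor_lower_sc_contract:
  assumes T: "orthonormal_frame g T" and inv: "matrix_inv g ** g = mat 1"
  shows "S (\<lambda>d. T$d$q * frame_tensor T (lower_sc C g) d a b) = S (\<lambda>i. S (\<lambda>j. T$a$i * T$b$j * C q i j))"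
proof -
  have "S (\<lambda>d. T$d$q * frame_tensor T (lower_sc C g) d a b)
      = S (\<lambda>i. S (\<lambda>j. T$a$i * T$b$j * S (\<lambda>p. S (\<lambda>e. T$e$q * T$e$p) * lower_sc C g p i j)))"
    unfolding frame_tensor_def sum_3 by algebra
  also have "\<dots> = S (\<lambda>i. S (\<lambda>j. T$a$i * T$b$j * C q i j))"
    unfolding orthonormal_frameD[OF T, symmetric] raise_lower_sc[OF inv, of C q, symmetric] ..
  finally show ?thesis .
qed

definition jacobi_term :: "t3 \<Rightarrow> 3 \<Rightarrow> 3 \<Rightarrow> 3 \<Rightarrow> 3 \<Rightarrow> real" where
  "jacobi_term X i j r m = S (\<lambda>q. X q i j * X m q r)"

lemma jacobi_sc_iff_jacobi_term:
  "jacobi_sc X \<longleftrightarrow> (\<forall>i j k m. jacobi_term X i j k m + jacobi_term X j k i m + jacobi_term X k i j m = 0)"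
  unfolding jacobi_sc_def jacobi_term_def by (simp add: sum.distrib)

lemma jacobi_term_frame_tensor:
  assumes T: "orthonormal_frame g T" and inv: "matrix_inv g ** g = mat 1"
  shows "jacobi_term (frame_tensor T (lower_sc C g)) a b c e = S (\<lambda>p. S (\<lambda>m. T$e$p * g$p$m *
           S (\<lambda>i. S (\<lambda>j. S (\<lambda>r. T$a$i * T$b$j * T$c$r * jacobi_term C i j r m)))))"
proof -
  let ?D = "frame_tensor T (lower_sc C g)"
  have "jacobi_term ?D a b c e
      = S (\<lambda>p. S (\<lambda>q. S (\<lambda>r. T$e$p * T$c$r * lower_sc C g p q r * S (\<lambda>d. T$d$q * ?D d a b))))"
    unfolding jacobi_term_def frame_tensor_def[of T "lower_sc C g" e] sum_3 by algebra
  also have "\<dots> = S (\<lambda>p. S (\<lambda>q. S (\<lambda>r. T$e$p * T$c$r * S (\<lambda>m. g$p$m * C m q r)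
      * S (\<lambda>i. S (\<lambda>j. T$a$i * T$b$j * C q i j)))))"
    unfolding frame_tensor_lower_sc_contract[OF T inv] lower_sc_def ..
  also have "\<dots> = S (\<lambda>p. S (\<lambda>m. T$e$p * g$p$m *
           S (\<lambda>i. S (\<lambda>j. S (\<lambda>r. T$a$i * T$b$j * T$c$r * jacobi_term C i j r m)))))"
    unfolding jacobi_term_def sum_3 by algebra
  finally show ?thesis .
qed

lemma jacobi_frame_tensor:
  assumes T: "orthonormal_frame g T" and inv: "matrix_inv g ** g = mat 1" and jac: "jacobi_sc C"
  shows "jacobi_sc (frame_tensor T (lower_sc C g))"
  unfolding jacobi_sc_iff_jacobi_term
proof (intro allI)
  fix a b c e
  let ?J = "jacobi_term (frame_tensor T (lower_sc C g))"
  have z: "jacobi_term C i j r m + jacobi_term C j r i m + jacobi_term C r i j m = 0" for i j r m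
    using jac unfolding jacobi_sc_iff_jacobi_term by blast
  have cyc: "S (\<lambda>i. S (\<lambda>j. S (\<lambda>r. T$a$i * T$b$j * T$c$r * J i j r)))
       + S (\<lambda>i. S (\<lambda>j. S (\<lambda>r. T$b$i * T$c$j * T$a$r * J i j r)))
       + S (\<lambda>i. S (\<lambda>j. S (\<lambda>r. T$c$i * T$a$j * T$b$r * J i j r)))
     = S (\<lambda>i. S (\<lambda>j. S (\<lambda>r. T$a$i * T$b$j * T$c$r * (J i j r + J j r i + J r i j))))"
    for J :: "3 \<Rightarrow> 3 \<Rightarrow> 3 \<Rightarrow> real"
    unfolding sum_3 by algebra
  have "?J a b c e + ?J b c a e + ?J c a b e
     = S (\<lambda>p. S (\<lambda>m. T$e$p * g$p$m *
           (S (\<lambda>i. S (\<lambda>j. S (\<lambda>r. T$a$i * T$b$j * T$c$r * jacobi_term C i j r m)))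
          + S (\<lambda>i. S (\<lambda>j. S (\<lambda>r. T$b$i * T$c$j * T$a$r * jacobi_term C i j r m)))
          + S (\<lambda>i. S (\<lambda>j. S (\<lambda>r. T$c$i * T$a$j * T$b$r * jacobi_term C i j r m))))))"
    unfolding jacobi_term_frame_tensor[OF T inv] by (simp add: sum.distrib distrib_left)
  also have "\<dots> = 0" unfolding cyc z by simp
  finally show "?J a b c e + ?J b c a e + ?J c a b e = 0" .
qed

lemma bianchi_IX_of_frame_tensor:
  assumes T: "orthonormal_frame g T" and inv: "matrix_inv g ** g = mat 1"
    and dT: "det T \<noteq> 0" and IX: "bianchi_IX (frame_tensor T (lower_sc C g))"
  shows "bianchi_IX C"
proof -
  let ?D = "frame_tensor T (lower_sc C g)"
  obtain P where iP: "invertible P"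
    and P: "\<And>a b k. S (\<lambda>i. S (\<lambda>j. P$a$i * P$b$j * ?D k i j)) = S (\<lambda>c. eps a b c * P$c$k)"
    using IX unfolding bianchi_IX_def by blast
  show ?thesis unfolding bianchi_IX_def
  proof (intro exI conjI allI)
    show "invertible (P ** T)"
      using iP dT by (simp add: invertible_det_nz det_mul)
    fix a b k
    have "S (\<lambda>i. S (\<lambda>j. (P ** T) $ a $ i * (P ** T) $ b $ j * C k i j))
      = S (\<lambda>a'. S (\<lambda>b'. P$a$a' * P$b$b' * S (\<lambda>i. S (\<lambda>j. T$a'$i * T$b'$j * C k i j))))"
      unfolding matrix_matrix_mult_def sum_3 by simp algebra
    also have "\<dots> = S (\<lambda>a'. S (\<lambda>b'. P$a$a' * P$b$b' * S (\<lambda>d. T$d$k * ?D d a' b')))"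
      unfolding frame_tensor_lower_sc_contract[OF T inv] ..
    also have "\<dots> = S (\<lambda>d. T$d$k * S (\<lambda>a'. S (\<lambda>b'. P$a$a' * P$b$b' * ?D d a' b')))"
      unfolding sum_3 by algebra
    also have "\<dots> = S (\<lambda>d. T$d$k * S (\<lambda>c. eps a b c * P$c$d))"
      unfolding P ..
    also have "\<dots> = S (\<lambda>c. eps a b c * (P ** T) $ c $ k)"
      unfolding matrix_matrix_mult_def sum_3 by simp algebra
    finally show "S (\<lambda>i. S (\<lambda>j. (P ** T) $ a $ i * (P ** T) $ b $ j * C k i j))
      = S (\<lambda>c. eps a b c * (P ** T) $ c $ k)" .
  qed
qed

lemma Rscal_nonpos:
  assumes B: "bianchi_I_to_VIII C" and pd: "posdef3 g"
  shows "Rscal C g \<le> 0"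
proof -
  note inv = posdef3_matrix_inv(1)[OF pd]
  obtain T where T: "orthonormal_frame g T" and dT: "det T > 0"
    using orthonormal_frame_exists[OF pd] .
  let ?D = "frame_tensor T (lower_sc C g)"
  have as: "antisym_sc C" and jac: "jacobi_sc C" and nIX: "\<not> bianchi_IX C"
    using B by (auto simp: bianchi_I_to_VIII_def)
  have asD: "antisym_sc ?D" by (rule frame_tensor_lower_sc_antisym[OF as])
  have "\<not> trace_sq_defect ?D < 0"
    using bianchi_IX_of_trace_sq_defect_neg[OF asD jacobi_frame_tensor[OF T inv jac]]
      bianchi_IX_of_frame_tensor[OF T inv] dT nIX by fastforce
  moreover have "Rscal C g = - trace_sq_defect ?D - 6 * S (\<lambda>j. (bianchi_a ?D j)^2)"
    using Rscal_orthonormal_frame[OF inv T] Rscal_mat1_bianchi[OF asD] by simp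
  moreover have "S (\<lambda>j. (bianchi_a ?D j)^2) \<ge> 0" by (simp add: sum_nonneg)
  ultimately show ?thesis by simp
qed

section \<open>The traced evolution equation\<close>

lemma trace_inv_mul:
  assumes inv: "h ** g = mat 1" and gs: "\<And>i j. g$i$j = g$j$i"
  shows "S (\<lambda>i. S (\<lambda>j. h$i$j * g$i$j)) = (3::real)"
proof -
  have "S (\<lambda>j. h$i$j * g$i$j) = 1" for i using matrix_inv_row[OF inv, of i i] by (simp add: gs)
  then show ?thesis by (simp add: sum_3)
qed

lemma inv_sandwich:
  assumes inv: "h ** g = mat 1" and gs: "\<And>i j. g$i$j = g$j$i"
  shows "S (\<lambda>i. S (\<lambda>j. g$i$k * h$i$j * g$j$l)) = (g$k$l :: real)"
proof -
  have "S (\<lambda>i. S (\<lambda>j. g$i$k * h$i$j * g$j$l)) = S (\<lambda>i. g$i$k * S (\<lambda>j. h$i$j * g$j$l))"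
    by (simp add: sum_distrib_left mult.assoc)
  also have "\<dots> = S (\<lambda>i. g$i$k * (if i = l then 1 else 0))" by (simp add: matrix_inv_row[OF inv])
  also have "\<dots> = g$l$k" using exhaust_3[of l] by (auto simp: sum_3)
  finally show ?thesis using gs by simp
qed

lemma KK_ge_Hm_sq:
  assumes "posdef3 g"
  shows "KK g K \<ge> (Hm g K)^2 / 3"
proof -
  obtain T where T: "orthonormal_frame g T" using orthonormal_frame_exists[OF assms] by blast
  define X where "X a b = S (\<lambda>i. S (\<lambda>j. T$a$i * T$b$j * K$i$j))" for a b
  have KK: "KK g K = S (\<lambda>a. S (\<lambda>b. (X a b)^2))" and H: "Hm g K = X 1 1 + X 2 2 + X 3 3"
    unfolding KK_def Kup_def Hm_def orthonormal_frameD[OF T] X_def sum_3 power2_eq_square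
    by algebra+
  have "(X 1 1 + X 2 2 + X 3 3)^2/3 \<le> (X 1 1)^2 + (X 2 2)^2 + (X 3 3)^2"
    using sum_power2_ge_zero[of "X 1 1 - X 2 2" "X 2 2 - X 3 3"] zero_le_power2[of "X 3 3 - X 1 1"]
    by (simp add: power2_eq_square field_simps)
  also have "\<dots> \<le> S (\<lambda>a. S (\<lambda>b. (X a b)^2))"
    unfolding sum_3 by simp
  finally show ?thesis unfolding KK H .
qed

lemma tau00_nonneg:
  assumes pd: "posdef3 g"
  shows "tau00 g E F \<ge> 0"
proof -
  obtain T where T: "orthonormal_frame g T" using orthonormal_frame_exists[OF pd] by blast
  have "S (\<lambda>i. S (\<lambda>j. S (\<lambda>k. S (\<lambda>l. matrix_inv g $i$k * matrix_inv g $j$l * F$k$l * F$i$j))))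
     = S (\<lambda>a. S (\<lambda>b. (S (\<lambda>i. S (\<lambda>j. T$a$i * T$b$j * F$i$j)))^2))"
    unfolding orthonormal_frameD[OF T] sum_3 power2_eq_square by algebra
  then show ?thesis
    unfolding tau00_def using posdef3_quadratic_nonneg[OF pd, of E] by (simp add: sum_nonneg)
qed

lemma u0_ge_1:
  assumes "posdef3 g"
  shows "u0 g u \<ge> 1"
  unfolding u0_def using posdef3_quadratic_nonneg[OF assms, of u] by simp

lemma T00_pos:
  assumes "posdef3 g" and "rho > 0" and "Th00 \<ge> 0"
  shows "T00 g u rho Th00 > 0"
proof -
  have "(u0 g u)^2 > 0" using u0_ge_1[OF assms(1), of u] by simp
  then have "4/3 * rho * (u0 g u)^2 > 0" using assms(2) by simp
  then show ?thesis unfolding T00_def using assms(3) by simp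
qed

lemma trace_tau:
  assumes pd: "posdef3 g"
  shows "S (\<lambda>i. S (\<lambda>j. matrix_inv g $i$j * tau g E F i j)) = tau00 g E F"
proof -
  note gi = posdef3_matrix_inv[OF pd]
  let ?h = "matrix_inv g"
  have gs: "g$i$j = g$j$i" for i j using pd by (rule posdef3_symmetric)
  have hs: "?h$2$1 = ?h$1$2" "?h$3$1 = ?h$1$3" "?h$3$2 = ?h$2$3" by (simp_all add: gi(3))
  define EE where "EE = S (\<lambda>k. S (\<lambda>l. g$k$l * E$k * E$l))"
  define FF where "FF = S (\<lambda>i. S (\<lambda>j. S (\<lambda>k. S (\<lambda>l. ?h $i$k * ?h $j$l * F$k$l * F$i$j))))"
  have split: "tau g E F i j = 1/2 * g$i$j * EE - S (\<lambda>k. S (\<lambda>l. g$i$k * g$j$l * E$k * E$l))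
     - 1/4 * g$i$j * FF + S (\<lambda>k. S (\<lambda>l. ?h $k$l * F$i$k * F$j$l))" for i j
  proof -
    have "S (\<lambda>k. S (\<lambda>l. S (\<lambda>m. S (\<lambda>n. ?h $k$m * ?h $n$l * F$k$l * F$m$n)))) = FF"
      unfolding FF_def sum_3 hs by algebra
    then show ?thesis unfolding tau_def EE_def sum_3 by (simp add: field_simps)
  qed
  have lin: "S (\<lambda>i. S (\<lambda>j. ?h$i$j * (a * g$i$j * X - B i j - b * g$i$j * Y + Cc i j)))
     = a * X * S (\<lambda>i. S (\<lambda>j. ?h$i$j * g$i$j)) - S (\<lambda>i. S (\<lambda>j. ?h$i$j * B i j))
       - b * Y * S (\<lambda>i. S (\<lambda>j. ?h$i$j * g$i$j)) + S (\<lambda>i. S (\<lambda>j. ?h$i$j * Cc i j))"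
    for a b X Y B Cc
    unfolding sum_3 by algebra
  have "S (\<lambda>i. S (\<lambda>j. ?h$i$j * S (\<lambda>k. S (\<lambda>l. ?h $k$l * F$i$k * F$j$l)))) = FF"
    unfolding FF_def sum_3 hs by algebra
  moreover have "S (\<lambda>i. S (\<lambda>j. ?h$i$j * S (\<lambda>k. S (\<lambda>l. g$i$k * g$j$l * E$k * E$l)))) = EE"
  proof -
    have "S (\<lambda>i. S (\<lambda>j. ?h$i$j * S (\<lambda>k. S (\<lambda>l. g$i$k * g$j$l * E$k * E$l))))
        = S (\<lambda>k. S (\<lambda>l. E$k * E$l * S (\<lambda>i. S (\<lambda>j. g$i$k * ?h$i$j * g$j$l))))"
      unfolding sum_3 by algebra
    then show ?thesis unfolding inv_sandwich[OF gi(1) gs] EE_def by (simp add: mult_ac)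
  qed
  ultimately have "S (\<lambda>i. S (\<lambda>j. ?h$i$j * tau g E F i j)) = 1/2 * EE * 3 - EE - 1/4 * FF * 3 + FF"
    unfolding split lin trace_inv_mul[OF gi(1) gs] by simp
  also have "\<dots> = tau00 g E F" unfolding tau00_def EE_def FF_def by (simp add: mult_ac)
  finally show ?thesis .
qed

lemma trace_Tm_nonneg:
  assumes pd: "posdef3 g" and r: "rho > 0"
  shows "S (\<lambda>l. S (\<lambda>m. matrix_inv g $l$m * Tm g u rho l m)) \<ge> 0"
proof -
  note gi = posdef3_matrix_inv[OF pd]
  have gs: "g$i$j = g$j$i" for i j using pd by (rule posdef3_symmetric)
  define v :: "real^3" where "v = (\<chi> i. ulow g u i)"
  have "S (\<lambda>l. S (\<lambda>m. matrix_inv g $l$m * Tm g u rho l m))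
     = 4/3 * rho * S (\<lambda>i. S (\<lambda>j. matrix_inv g $i$j * v$i * v$j))
       + 1/3 * rho * S (\<lambda>i. S (\<lambda>j. matrix_inv g $i$j * g$i$j))"
    unfolding Tm_def v_def sum_3 by (simp add: algebra_simps)
  then show ?thesis
    using posdef3_quadratic_nonneg[OF gi(4), of v] r trace_inv_mul[OF gi(1) gs] by simp
qed

lemma trace_Kmix_K:
  assumes hs: "\<And>i j. matrix_inv g $i$j = matrix_inv g $j$i" and Ks: "symm3 K"
  shows "S (\<lambda>i. S (\<lambda>j. matrix_inv g $i$j * S (\<lambda>l. Kmix g K l j * K$i$l))) = KK g K"
proof -
  have sym: "matrix_inv g$2$1 = matrix_inv g$1$2" "matrix_inv g$3$1 = matrix_inv g$1$3"
    "matrix_inv g$3$2 = matrix_inv g$2$3" "K$2$1 = K$1$2" "K$3$1 = K$1$3" "K$3$2 = K$2$3"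
    using hs Ks by (auto simp: symm3_def)
  show ?thesis unfolding KK_def Kup_def Kmix_def sum_3 sym by algebra
qed

lemma trace_Kdot:
  assumes pd: "posdef3 g" and Ks: "symm3 K"
  shows "S (\<lambda>i. S (\<lambda>j. matrix_inv g $i$j * Kdot C Lam g K F E u Th00 Th0 rho $ i $ j))
     = Rscal C g + (Hm g K)^2 - 2 * KK g K
       - 8 * pi * (tau00 g E F + S (\<lambda>l. S (\<lambda>m. matrix_inv g $l$m * Tm g u rho l m)))
       + 12 * pi * (- T00 g u rho Th00 + S (\<lambda>l. S (\<lambda>m. matrix_inv g $l$m * Tm g u rho l m)))
       - 3 * Lam"
proof -
  note gi = posdef3_matrix_inv[OF pd]
  have gs: "g$i$j = g$j$i" for i j using pd by (rule posdef3_symmetric)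
  let ?h = "matrix_inv g"
  have lin: "S (\<lambda>i. S (\<lambda>j. ?h$i$j * (R i j + H * K' i j - 2 * M i j - c8 * (ta i j + tm i j)
         + c4 * X * g$i$j - L * g$i$j)))
     = S (\<lambda>i. S (\<lambda>j. ?h$i$j * R i j)) + H * S (\<lambda>i. S (\<lambda>j. ?h$i$j * K' i j))
       - 2 * S (\<lambda>i. S (\<lambda>j. ?h$i$j * M i j))
       - c8 * (S (\<lambda>i. S (\<lambda>j. ?h$i$j * ta i j)) + S (\<lambda>i. S (\<lambda>j. ?h$i$j * tm i j)))
       + c4 * X * S (\<lambda>i. S (\<lambda>j. ?h$i$j * g$i$j)) - L * S (\<lambda>i. S (\<lambda>j. ?h$i$j * g$i$j))"
    for R H K' M c8 ta tm c4 X L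
    unfolding sum_3 by algebra
  show ?thesis
    unfolding Kdot_def vec_lambda_beta lin trace_inv_mul[OF gi(1) gs] trace_tau[OF pd]
      trace_Kmix_K[OF gi(3) Ks] Rscal_def[symmetric] Hm_def[symmetric]
    by (simp add: power2_eq_square)
qed

lemma Hm_sq_gt:
  assumes B: "bianchi_I_to_VIII C" and pd: "posdef3 g" and "rho > 0" "Th00 \<ge> 0"
    and "C1 C Lam g K F E u Th00 rho"
  shows "(Hm g K)^2 > 3 * Lam"
proof -
  have "16 * pi * (tau00 g E F + T00 g u rho Th00) > 0"
    using tau00_nonneg[OF pd] T00_pos[OF pd assms(3,4)] by (simp add: add_nonneg_pos)
  then show ?thesis
    using assms(5) Rscal_nonpos[OF B pd] KK_ge_Hm_sq[OF pd, of K] unfolding C1_def by linarith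
qed

lemma vec_nth2_has_real_derivative:
  assumes "(g has_vector_derivative G) F"
  shows "((\<lambda>s. g s $ i $ j) has_real_derivative G $ i $ j) F"
proof -
  have "((\<lambda>s. g s $ i) has_vector_derivative G $ i) F"
    using bounded_linear.has_vector_derivative[OF bounded_linear_vec_nth assms] .
  then have "((\<lambda>s. g s $ i $ j) has_vector_derivative G $ i $ j) F"
    using bounded_linear.has_vector_derivative[OF bounded_linear_vec_nth] by blast
  then show ?thesis by (simp add: has_real_derivative_iff_has_vector_derivative)
qed

lemma matrix_inv_entry_differentiable:
  fixes g :: "real \<Rightarrow> mat3"
  assumes d: "\<And>i j. (\<lambda>s. g s $ i $ j) field_differentiable (at t within I)"
    and det: "\<And>s. s \<in> I \<Longrightarrow> det (g s) \<noteq> 0" and t: "t \<in> I"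
  shows "(\<lambda>s. matrix_inv (g s) $ i $ j) field_differentiable (at t within I)"
proof (rule field_differentiable_transform_within[OF zero_less_one t])
  show "(\<lambda>s. adj3 (g s) $ i $ j / det (g s)) field_differentiable (at t within I)"
    using exhaust_3[of i] exhaust_3[of j] det[OF t]
    by (auto simp: adj3_def vector_3 det_3 intro!: field_differentiable_divide
        field_differentiable_diff field_differentiable_add field_differentiable_mult d)
  show "adj3 (g s) $ i $ j / det (g s) = matrix_inv (g s) $ i $ j" if "s \<in> I" for s
    using det[OF that] by (simp add: matrix_inv_adj3)
qed

lemma has_real_derivative_unique_within:
  assumes "at t within I \<noteq> bot" "(f has_real_derivative D1) (at t within I)"
    "(f has_real_derivative D2) (at t within I)"
  shows "D1 = D2"
  using assms vector_derivative_unique_within has_real_derivative_iff_has_vector_derivative by metis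

lemma solve_derivative_of_inverse:
  fixes h g D G :: mat3
  assumes inv: "h ** g = mat 1"
    and e: "\<And>i l. S (\<lambda>j. G$i$j * h$j$l + g$i$j * D$j$l) = 0"
  shows "D$m$l = - S (\<lambda>i. S (\<lambda>j. h$m$i * G$i$j * h$j$l))"
proof -
  have e': "S (\<lambda>j. g$i$j * D$j$l) = - S (\<lambda>j. G$i$j * h$j$l)" for i
    using e[of i l] by (simp add: sum.distrib eq_neg_iff_add_eq_0 add.commute)
  have "D$m$l = S (\<lambda>j. (if m = j then 1 else 0) * D$j$l)"
    using exhaust_3[of m] by (auto simp: sum_3)
  also have "\<dots> = S (\<lambda>j. S (\<lambda>i. h$m$i * g$i$j) * D$j$l)" by (simp add: matrix_inv_row[OF inv])
  also have "\<dots> = S (\<lambda>i. h$m$i * S (\<lambda>j. g$i$j * D$j$l))" unfolding sum_3 by algebra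
  also have "\<dots> = - S (\<lambda>i. S (\<lambda>j. h$m$i * G$i$j * h$j$l))" unfolding e' sum_3 by algebra
  finally show ?thesis .
qed

text \<open>Differentiability of \<open>g\<^sup>-\<^sup>1\<close> comes from the adjugate formula; the value of the derivative
  from differentiating \<open>g g\<^sup>-\<^sup>1 = 1\<close>.\<close>

lemma matrix_inv_entry_has_derivative:
  fixes g :: "real \<Rightarrow> mat3"
  assumes tI: "t \<in> I" and nb: "at t within I \<noteq> bot" and pd: "\<And>s. s \<in> I \<Longrightarrow> posdef3 (g s)"
    and gd: "(g has_vector_derivative G) (at t within I)"
  shows "((\<lambda>s. matrix_inv (g s) $ m $ l) has_real_derivative
           - S (\<lambda>i. S (\<lambda>j. matrix_inv (g t) $m$i * G$i$j * matrix_inv (g t) $j$l))) (at t within I)"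
proof -
  have c: "((\<lambda>s. g s $i$j) has_real_derivative G$i$j) (at t within I)" for i j
    by (rule vec_nth2_has_real_derivative[OF gd])
  have "det (g s) \<noteq> 0" if "s \<in> I" for s using posdef3_det_pos[OF pd[OF that]] by simp
  then have "(\<lambda>s. matrix_inv (g s) $ i $ j) field_differentiable (at t within I)" for i j
    using c tI by (intro matrix_inv_entry_differentiable) (auto simp: field_differentiable_def)
  then obtain Dh where Dh: "\<And>i j. ((\<lambda>s. matrix_inv (g s) $ i $ j) has_real_derivative Dh i j) (at t within I)"
    unfolding field_differentiable_def by metis
  define Dm :: mat3 where "Dm = (\<chi> i j. Dh i j)"
  have rel: "S (\<lambda>j. G$i$j * matrix_inv (g t) $j$l' + g t $i$j * Dm$j$l') = 0" for i l'
  proof -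
    have "((\<lambda>s. S (\<lambda>j. g s $i$j * matrix_inv (g s) $j$l')) has_real_derivative
              S (\<lambda>j. G$i$j * matrix_inv (g t) $j$l' + Dh j l' * g t $i$j)) (at t within I)"
      by (intro DERIV_sum DERIV_mult c Dh)
    moreover have "((\<lambda>s. S (\<lambda>j. g s $i$j * matrix_inv (g s) $j$l')) has_real_derivative 0) (at t within I)"
    proof (rule has_field_derivative_transform_within[OF DERIV_const zero_less_one tI])
      show "(if i = l' then 1 else 0) = S (\<lambda>j. g x $i$j * matrix_inv (g x) $j$l')" if "x \<in> I" for x
        using posdef3_matrix_inv(2)[OF pd[OF that]] by (simp add: matrix_inv_row)
    qed
    ultimately show ?thesis
      using has_real_derivative_unique_within[OF nb] by (fastforce simp: Dm_def mult.commute)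
  qed
  show ?thesis
    using solve_derivative_of_inverse[OF posdef3_matrix_inv(1)[OF pd[OF tI]] rel, of m l] Dh[of m l]
    by (simp add: Dm_def)
qed

lemma Hm_has_derivative:
  fixes g K :: "real \<Rightarrow> mat3"
  assumes tI: "t \<in> I" and nb: "at t within I \<noteq> bot" and pd: "\<And>s. s \<in> I \<Longrightarrow> posdef3 (g s)"
    and gd: "(g has_vector_derivative G) (at t within I)"
    and kd: "(K has_vector_derivative KD) (at t within I)"
  shows "((\<lambda>s. Hm (g s) (K s)) has_real_derivative
      S (\<lambda>i. S (\<lambda>j. (- S (\<lambda>k. S (\<lambda>l. matrix_inv (g t) $i$k * G$k$l * matrix_inv (g t) $l$j))) * K t $i$j
            + KD$i$j * matrix_inv (g t) $i$j))) (at t within I)"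
  unfolding Hm_def
  by (intro DERIV_sum DERIV_mult matrix_inv_entry_has_derivative[OF tI nb pd gd]
      vec_nth2_has_real_derivative[OF kd])

text \<open>With \<open>\<dot>g = -2K\<close> the derivative of \<open>H = g\<^sup>i\<^sup>jK\<^sub>i\<^sub>j\<close> is \<open>2K\<^sub>i\<^sub>jK\<^sup>i\<^sup>j + g\<^sup>i\<^sup>j\<dot>K\<^sub>i\<^sub>j\<close>; eliminating
  \<open>R\<close> by (C1) leaves \<open>K\<^sub>i\<^sub>jK\<^sup>i\<^sup>j - \<Lambda>\<close> plus nonnegative matter terms.\<close>

lemma Hm_derivative_ge:
  fixes g K :: "real \<Rightarrow> mat3" and F :: mat3 and E u Th0 :: vec3 and Th00 rho :: real
  assumes kd: "(K has_vector_derivative Kdot C Lam (g t) (K t) F E u Th00 Th0 rho) (at t within I)"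
    and gd: "(g has_vector_derivative (- 2 *\<^sub>R K t)) (at t within I)"
    and tI: "t \<in> I" and nb: "at t within I \<noteq> bot" and pd: "\<And>s. s \<in> I \<Longrightarrow> posdef3 (g s)"
    and Ks: "symm3 (K t)" and rho: "rho > 0" and Th00: "Th00 \<ge> 0"
    and c1: "C1 C Lam (g t) (K t) F E u Th00 rho"
  shows "\<exists>D. ((\<lambda>s. Hm (g s) (K s)) has_real_derivative D) (at t within I) \<and> D \<ge> KK (g t) (K t) - Lam"
proof -
  let ?h = "matrix_inv (g t)"
  let ?KD = "Kdot C Lam (g t) (K t) F E u Th00 Th0 rho"
  let ?trT = "S (\<lambda>l. S (\<lambda>m. ?h $l$m * Tm (g t) u rho l m))"
  have hs: "?h$2$1 = ?h$1$2" "?h$3$1 = ?h$1$3" "?h$3$2 = ?h$2$3"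
    by (simp_all add: posdef3_matrix_inv(3)[OF pd[OF tI]])
  have "S (\<lambda>i. S (\<lambda>j. (- S (\<lambda>k. S (\<lambda>l. ?h$i$k * (- 2 *\<^sub>R K t)$k$l * ?h$l$j))) * K t $i$j
          + ?KD$i$j * ?h$i$j))
      = 2 * KK (g t) (K t) + S (\<lambda>i. S (\<lambda>j. ?h$i$j * ?KD $ i $ j))"
    unfolding KK_def Kup_def sum_3 hs by (simp add: algebra_simps)
  also have "\<dots> = KK (g t) (K t) - Lam + 8 * pi * tau00 (g t) E F
      + 4 * pi * T00 (g t) u rho Th00 + 4 * pi * ?trT"
    using c1 unfolding trace_Kdot[OF pd[OF tI] Ks] C1_def by (simp add: algebra_simps)
  also have "\<dots> \<ge> KK (g t) (K t) - Lam"
    using tau00_nonneg[OF pd[OF tI], of E F] T00_pos[OF pd[OF tI] rho Th00, of u]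
      trace_Tm_nonneg[OF pd[OF tI] rho, of u]
    by (simp add: add_nonneg_nonneg)
  finally show ?thesis
    using Hm_has_derivative[OF tI nb pd gd kd] by blast
qed

lemma nondecreasing_of_derivative_nonneg_within:
  fixes f :: "real \<Rightarrow> real"
  assumes d: "\<And>x. x \<in> {0..<T} \<Longrightarrow> \<exists>D\<ge>0. (f has_real_derivative D) (at x within {0..<T})"
    and t: "t \<in> {0..<T}"
  shows "f 0 \<le> f t"
proof (rule DERIV_nonneg_imp_increasing_open[where f = f and a = 0 and b = t])
  show "0 \<le> t" using t by simp
  have "continuous_on {0..<T} f"
    unfolding continuous_on_eq_continuous_within using d DERIV_continuous by blast
  then show "continuous_on {0..t} f" by (rule continuous_on_subset) (use t in auto)
  fix x assume x: "0 < x" "x < t"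
  then obtain D where "D \<ge> 0" and D: "(f has_real_derivative D) (at x within {0..<T})"
    using d[of x] t by auto
  moreover have "at x within {0..<T} = at x"
    using x t by (intro at_within_interior) (auto simp: interior_atLeastLessThan)
  ultimately show "\<exists>y. (f has_real_derivative y) (at x) \<and> y \<ge> 0" by auto
qed

lemma below_of_continuous_sq_gt:
  fixes f :: "real \<Rightarrow> real"
  assumes cont: "continuous_on {0..<T} f" and f0: "f 0 < 0" and c: "c \<ge> 0"
    and sq: "\<And>x. x \<in> {0..<T} \<Longrightarrow> c^2 < (f x)^2" and t: "t \<in> {0..<T}"
  shows "f t < - c"
proof (rule ccontr)
  assume "\<not> f t < - c"
  have "\<not> f t \<le> 0"
  proof
    assume "f t \<le> 0"
    then have "\<bar>f t\<bar> \<le> \<bar>c\<bar>" using \<open>\<not> f t < - c\<close> c by auto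
    then show False using sq[OF t] abs_le_square_iff by force
  qed
  then have "f t > 0" by simp
  moreover have "continuous_on {0..t} f" by (rule continuous_on_subset[OF cont]) (use t in auto)
  ultimately obtain x where "0 \<le> x" "x \<le> t" "f x = 0"
    using IVT'[of f 0 0 t] f0 t by auto
  then show False using sq[of x] t by simp
qed

theorem mainTheorem7:
  fixes C :: sconst and Lam T :: real
    and g K F :: "real \<Rightarrow> mat3"
    and E u Th0 :: "real \<Rightarrow> vec3"
    and Th00 rho e :: "real \<Rightarrow> real"
  assumes bianchi: "bianchi_I_to_VIII C"
    and Lam_pos: "Lam > 0"
    and g_pd: "\<forall>t\<in>{0..<T}. posdef3 (g t)"
    and K_sym: "\<forall>t\<in>{0..<T}. symm3 (K t)"
    and F_anti: "\<forall>t\<in>{0..<T}. antisymm3 (F t)"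
    and rho_pos: "\<forall>t\<in>{0..<T}. rho t > 0"
    and e_nonneg: "\<forall>t\<in>{0..<T}. e t \<ge> 0"
    and Th00_nonneg: "\<forall>t\<in>{0..<T}. Th00 t \<ge> 0"
    and ode_g: "\<forall>t\<in>{0..<T}. (g has_vector_derivative (- 2 *\<^sub>R K t)) (at t within {0..<T})"
    and ode_K: "\<forall>t\<in>{0..<T}. (K has_vector_derivative
                   Kdot C Lam (g t) (K t) (F t) (E t) (u t) (Th00 t) (Th0 t) (rho t))
                 (at t within {0..<T})"
    and ode_F: "\<forall>t\<in>{0..<T}. (F has_vector_derivative Fdot C (g t) (E t)) (at t within {0..<T})"
    and ode_E: "\<forall>t\<in>{0..<T}. (E has_vector_derivative Edot C (g t) (K t) (F t) (E t) (u t))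
                 (at t within {0..<T})"
    and ode_u: "\<forall>t\<in>{0..<T}. (u has_vector_derivative udot C (g t) (K t) (F t) (E t) (u t) (rho t))
                 (at t within {0..<T})"
    and ode_Th00: "\<forall>t\<in>{0..<T}. (Th00 has_real_derivative
                   Th00dot C (g t) (K t) (u t) (Th00 t) (Th0 t) (rho t)) (at t within {0..<T})"
    and ode_Th0: "\<forall>t\<in>{0..<T}. (Th0 has_vector_derivative
                   Th0dot C (g t) (K t) (u t) (Th0 t) (rho t)) (at t within {0..<T})"
    and ode_rho: "\<forall>t\<in>{0..<T}. (rho has_real_derivative
                   rhodot C (g t) (K t) (E t) (u t) (rho t)) (at t within {0..<T})"
    and ode_e: "\<forall>t\<in>{0..<T}. (e has_real_derivative
                   edot C (g t) (K t) (E t) (u t) (rho t) (e t)) (at t within {0..<T})"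
    and cC1: "\<forall>t\<in>{0..<T}. C1 C Lam (g t) (K t) (F t) (E t) (u t) (Th00 t) (rho t)"
    and cC2: "\<forall>t\<in>{0..<T}. C2 C (g t) (K t) (F t) (E t) (u t) (Th0 t) (rho t)"
    and cC3: "\<forall>t\<in>{0..<T}. C3 C (F t)"
    and cC4: "\<forall>t\<in>{0..<T}. C4 C (g t) (E t) (u t) (e t)"
    and H0_neg: "Hm (g 0) (K 0) < 0"
  shows "\<forall>t\<in>{0..<T}.
           (\<exists>D. ((\<lambda>s. Hm (g s) (K s)) has_real_derivative D) (at t within {0..<T})
                \<and> D \<ge> KK (g t) (K t) - Lam)
         \<and> KK (g t) (K t) - Lam \<ge> (Hm (g t) (K t))^2 / 3 - Lam
         \<and> (Hm (g t) (K t))^2 / 3 - Lam \<ge> 0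
         \<and> Hm (g 0) (K 0) - Lam * t \<le> Hm (g t) (K t)
         \<and> Hm (g t) (K t) < - sqrt (3 * Lam)"
proof -
  let ?I = "{0..<T}" and ?H = "\<lambda>s. Hm (g s) (K s)"
  have pd: "\<And>s. s \<in> ?I \<Longrightarrow> posdef3 (g s)" using g_pd by blast
  have deriv: "\<exists>D. (?H has_real_derivative D) (at t within ?I) \<and> D \<ge> KK (g t) (K t) - Lam"
    if t: "t \<in> ?I" for t
    using Hm_derivative_ge[OF ode_K[rule_format, OF t] ode_g[rule_format, OF t] t _ pd] t
      K_sym rho_pos Th00_nonneg cC1 by (auto simp: trivial_limit_within)
  have KK: "KK (g t) (K t) \<ge> (?H t)^2 / 3" if "t \<in> ?I" for t
    using KK_ge_Hm_sq pd that by blast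
  have Hsq: "(?H t)^2 > 3 * Lam" if "t \<in> ?I" for t
    using Hm_sq_gt[OF bianchi pd] rho_pos Th00_nonneg cC1 that by blast
  have mono: "?H 0 \<le> ?H t" if "t \<in> ?I" for t
  proof (rule nondecreasing_of_derivative_nonneg_within[OF _ that])
    fix x assume x: "x \<in> ?I"
    have "KK (g x) (K x) - Lam \<ge> 0" using KK[OF x] Hsq[OF x] by simp
    then show "\<exists>D\<ge>0. (?H has_real_derivative D) (at x within ?I)"
      using deriv[OF x] by (meson order_trans)
  qed
  have "continuous_on ?I ?H"
    unfolding continuous_on_eq_continuous_within using deriv DERIV_continuous by blast
  then have neg: "?H t < - sqrt (3 * Lam)" if "t \<in> ?I" for t
    using Hsq Lam_pos H0_neg that by (intro below_of_continuous_sq_gt) auto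
  show ?thesis
  proof (intro ballI conjI)
    fix t assume t: "t \<in> ?I"
    show "\<exists>D. (?H has_real_derivative D) (at t within ?I) \<and> D \<ge> KK (g t) (K t) - Lam"
      by (rule deriv[OF t])
    show "KK (g t) (K t) - Lam \<ge> (?H t)^2 / 3 - Lam" using KK[OF t] by simp
    show "(?H t)^2 / 3 - Lam \<ge> 0" using Hsq[OF t] by simp
    have "Lam * t \<ge> 0" using Lam_pos t by simp
    then show "?H 0 - Lam * t \<le> ?H t" using mono[OF t] by linarith
    show "?H t < - sqrt (3 * Lam)" by (rule neg[OF t])
  qed
qed

end
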